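(* Let $E$ be a separable Banach space and let $\{A(t)\}_{t\geq 0}$ be a family of linear operators in $E$. For $\lambda>0$ let $\{R^{(\lambda)}(t,s)\}_{t\geq s\geq 0}$ be a linear evolution system on $E$ corresponding to the problems $\dot u(t)=A(t/\lambda)u(t)$, $t>s$, $u(s)=\bar u\in E$. Suppose that (A1) there are $M\geq 1$ and $\omega\in\mathbb{R}$ such that $\|R^{(\lambda)}(t,s)\|\leq Me^{\omega(t-s)}$ for all $\lambda>0$ and $t\geq s\geq 0$; (A2) there exists a $C_0$ semigroup $\{\widehat S(t)\}_{t\geq 0}$ of bounded linear operators on $E$ with infinitesimal generator $\widehat A$ such that, for any $\bar u\in E$ and $t,s\geq 0$ with $t\geq s$, $\lim_{\lambda\to 0^+,\ \bar v\to\bar u} R^{(\lambda)}(t,s)\bar v=\widehat S(t-s)\bar u$, uniformly with respect to $t,s$ from bounded intervals; (A3) $F:[0,+\infty)\times E\to E$ is continuous, Lipschitz on bounded subsets of $E$ in the second variable uniformly with respect to $t\geq 0$, and has sublinear growth uniformly with respect to $t$, i.e. there is $c>0$ with $\|F(t,\bar v)\|\leq c(1+\|\bar v\|)$ for all $t\geq 0$, $\bar v\in E$; (A4) for each $\bar u\in E$ the set $\{F(t,\bar u)\mid t\geq 0\}$ is relatively compact, and there is a locally Lipschitz mapping $\widehat F:E\to E$ such that for any $\bar u\in E$ and $h>0$, $\widehat F(\bar u)=\lim_{T\to+\infty,\ \bar v\to\bar u}\frac{1}{T}\int_0^T F(\tau+h,\bar v)\,d\tau$, uniformly with respect to $h$.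 Then, for any sequences $(\lambda_n)$ in $(0,+\infty)$ and $(\bar u_n)$ in $E$ with $\lambda_n\to 0^+$ and $\bar u_n\to\bar u_0\in E$, the mild solutions $u_n:[0,+\infty)\to E$ of $\dot u(t)=A(t/\lambda_n)u(t)+F(t/\lambda_n,u(t))$, $t>0$, with $u_n(0)=\bar u_n$, converge uniformly on bounded intervals to the mild solution of the averaged problem $\dot u(t)=\widehat A u(t)+\widehat F(u(t))$, $t>0$, $u(0)=\bar u_0$.
   Context: An evolution system on $E$ is a family $\{R(t,s)\}_{t\geq s\geq 0}$ of bounded linear operators with $R(t,t)=I$, $R(t,s)R(s,r)=R(t,r)$ for $t\geq s\geq r\geq 0$, and $(s,t)\mapsto R(t,s)\bar u$ continuous for each $\bar u\in E$. A mild solution of $\dot u=A(t/\lambda)u+F(t/\lambda,u)$, $u(0)=\bar u$, on $[0,\omega)$ is a continuous $u:[0,\omega)\to E$ with $u(t)=R^{(\lambda)}(t,0)\bar u+\int_0^t R^{(\lambda)}(t,\tau)F(\tau/\lambda,u(\tau))\,d\tau$; for the averaged problem, mild solutions are defined with $\widehat S(t-\tau)$ in place of $R^{(\lambda)}(t,\tau)$ and $\widehat F(u(\tau))$ in place of $F(\tau/\lambda,u(\tau))$. *)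

theory Defs
  imports "HOL-Analysis.Analysis"
begin

definition separable_space :: "'a::metric_space itself \<Rightarrow> bool" where
  "separable_space _ \<longleftrightarrow> (\<exists>D::'a set. countable D \<and> closure D = UNIV)"

definition evolution_system :: "(real \<Rightarrow> real \<Rightarrow> ('e::real_normed_vector \<Rightarrow>\<^sub>L 'e)) \<Rightarrow> bool" where
  "evolution_system R \<longleftrightarrow>
     (\<forall>t\<ge>0. R t t = id_blinfun) \<and>
     (\<forall>t s r. 0 \<le> r \<and> r \<le> s \<and> s \<le> t \<longrightarrow> R t s o\<^sub>L R s r = R t r) \<and>
     (\<forall>u. continuous_on {(s, t). 0 \<le> s \<and> s \<le> t} (\<lambda>(s, t). blinfun_apply (R t s) u))"

definition C0_semigroup :: "(real \<Rightarrow> ('e::real_normed_vector \<Rightarrow>\<^sub>L 'e)) \<Rightarrow> bool" where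
  "C0_semigroup S \<longleftrightarrow>
     S 0 = id_blinfun \<and>
     (\<forall>t s. 0 \<le> t \<and> 0 \<le> s \<longrightarrow> S (t + s) = S t o\<^sub>L S s) \<and>
     (\<forall>u. continuous_on {0..} (\<lambda>t. blinfun_apply (S t) u))"

text \<open>Mild solution on \<open>[0,\<infinity>)\<close> of \<open>u' = A(t/\<lambda>) u + F(t/\<lambda>, u)\<close>, \<open>u(0) = u0\<close>,
  where \<open>R\<close> is the evolution system \<open>R^{(\<lambda>)}\<close>.\<close>
definition mild_solution ::
  "(real \<Rightarrow> real \<Rightarrow> ('e::banach \<Rightarrow>\<^sub>L 'e)) \<Rightarrow> real \<Rightarrow> (real \<Rightarrow> 'e \<Rightarrow> 'e) \<Rightarrow> 'e \<Rightarrow> (real \<Rightarrow> 'e) \<Rightarrow> bool" where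
  "mild_solution R lam F u0 u \<longleftrightarrow>
     continuous_on {0..} u \<and>
     (\<forall>t\<ge>0. ((\<lambda>\<tau>. blinfun_apply (R t \<tau>) (F (\<tau> / lam) (u \<tau>))) has_integral
               (u t - blinfun_apply (R t 0) u0)) {0..t})"

text \<open>Mild solution on \<open>[0,\<infinity>)\<close> of the averaged problem \<open>u' = \<hat>A u + \<hat>F(u)\<close>, \<open>u(0) = u0\<close>,
  where \<open>S\<close> is the semigroup generated by \<open>\<hat>A\<close>.\<close>
definition avg_mild_solution ::
  "(real \<Rightarrow> ('e::banach \<Rightarrow>\<^sub>L 'e)) \<Rightarrow> ('e \<Rightarrow> 'e) \<Rightarrow> 'e \<Rightarrow> (real \<Rightarrow> 'e) \<Rightarrow> bool" where
  "avg_mild_solution S Fh u0 u \<longleftrightarrow>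
     continuous_on {0..} u \<and>
     (\<forall>t\<ge>0. ((\<lambda>\<tau>. blinfun_apply (S (t - \<tau>)) (Fh (u \<tau>))) has_integral
               (u t - blinfun_apply (S t) u0)) {0..t})"

end

theory Submission
  imports Defs
begin

text \<open>Both mild solutions solve Volterra integral equations
  \<open>w(t) = a(t) + \<integral>\<^sub>0\<^sup>t K(t,s) G(s, w(s)) ds\<close> with a strongly continuous, locally bounded kernel
  and a nonlinearity that is Lipschitz on bounded sets and of linear growth. Such equations have
  unique global solutions (Banach's fixed point theorem after truncating \<open>G\<close>), bounded a priori
  by Gronwall's inequality.

  By Gronwall's inequality again, \<open>u\<^sub>n \<rightarrow> u\<close> uniformly on \<open>[0,T]\<close> as soon as the defect of the
  limit solution \<open>u\<close> in the \<open>\<lambda>\<^sub>n\<close>-problem tends to \<open>0\<close> uniformly. The defect consists of the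
  errors made by replacing \<open>R\<^sub>\<lambda>\<close> with \<open>S\<close>, controlled by (A2) uniformly on compact sets (the values
  of \<open>F\<close> along \<open>u\<close> form one, by (A4)), and of
  \<open>\<integral>\<^sub>0\<^sup>t S(t-\<tau>) (F(\<tau>/\<lambda>, u(\<tau>)) - Fh(u(\<tau>))) d\<tau>\<close>. On intervals of a length \<open>h\<close> with \<open>\<lambda> \<ll> h \<ll> 1\<close>,
  \<open>S\<close> and \<open>u\<close> are nearly constant, and the integral of \<open>F(\<tau>/\<lambda>, \<cdot>)\<close> is \<open>h\<close> times a time average
  of \<open>F\<close> over the long interval \<open>h/\<lambda>\<close>, which is close to \<open>Fh\<close> by (A4).\<close>

section \<open>Integral estimates\<close>

lemma has_integral_exp_scaled:
  fixes g :: real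
  assumes "g > 0" "0 \<le> t"
  shows "((\<lambda>x. exp (g * x)) has_integral (exp (g * t) - 1) / g) {0..t}"
proof -
  have "((\<lambda>x. exp (g * x)) has_integral (exp (g * t) / g - exp (g * 0) / g)) {0..t}"
    by (rule fundamental_theorem_of_calculus[OF assms(2)])
      (use assms(1) in \<open>auto intro!: derivative_eq_intros
         simp: has_real_derivative_iff_has_vector_derivative[symmetric]\<close>)
  then show ?thesis by (simp add: diff_divide_distrib)
qed

text \<open>The maximum \<open>D\<close> of
  \<open>e\<^sup>-\<^sup>2\<^sup>b\<^sup>x \<phi>(x)\<close> satisfies \<open>D \<le> a + D/2\<close>, which avoids any differentiation of \<open>\<phi>\<close>.\<close>

lemma gronwall_exp_bound:
  fixes \<phi> :: "real \<Rightarrow> real"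
  assumes cont: "continuous_on {0..T} \<phi>" and nonneg: "\<And>t. t \<in> {0..T} \<Longrightarrow> 0 \<le> \<phi> t"
    and a: "0 \<le> a" and b: "0 < b"
    and ineq: "\<And>t. t \<in> {0..T} \<Longrightarrow> \<phi> t \<le> a + b * integral {0..t} \<phi>"
    and t: "t \<in> {0..T}"
  shows "\<phi> t \<le> 2 * a * exp (2 * b * T)"
proof -
  define \<gamma> where "\<gamma> = 2 * b"
  have \<gamma>: "\<gamma> > 0" using b by (simp add: \<gamma>_def)
  define \<psi> where "\<psi> x = exp (- \<gamma> * x) * \<phi> x" for x
  have "continuous_on {0..T} \<psi>" unfolding \<psi>_def by (intro continuous_intros cont)
  then obtain t0 where t0: "t0 \<in> {0..T}" and max: "\<And>x. x \<in> {0..T} \<Longrightarrow> \<psi> x \<le> \<psi> t0"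
    using continuous_attains_sup[OF compact_Icc] t by (metis empty_iff)
  define D where "D = \<psi> t0"
  have D: "0 \<le> D" using nonneg[OF t0] by (simp add: D_def \<psi>_def)
  have \<phi>_le: "\<phi> x \<le> D * exp (\<gamma> * x)" if "x \<in> {0..T}" for x
  proof -
    have "exp (- \<gamma> * x) * \<phi> x * exp (\<gamma> * x) \<le> D * exp (\<gamma> * x)"
      using max[OF that] by (simp add: mult_right_mono \<psi>_def D_def)
    then show ?thesis by (simp add: mult.commute mult.left_commute flip: exp_add)
  qed
  have \<psi>_le: "\<psi> x \<le> a + D / 2" if x: "x \<in> {0..T}" for x
  proof -
    have sub: "{0..x} \<subseteq> {0..T}" using x by auto
    have "integral {0..x} \<phi> \<le> D * ((exp (\<gamma> * x) - 1) / \<gamma>)"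
      using has_integral_le[OF integrable_integral has_integral_mult_right[OF has_integral_exp_scaled[OF \<gamma>]]]
        integrable_continuous_real[OF continuous_on_subset[OF cont sub]] \<phi>_le sub x by auto
    then have "\<phi> x \<le> a + b * (D * ((exp (\<gamma> * x) - 1) / \<gamma>))"
      using ineq[OF x] b by (smt (verit) mult_left_mono)
    also have "\<dots> = a + D / 2 * (exp (\<gamma> * x) - 1)"
      using b by (simp add: \<gamma>_def field_simps)
    finally have "\<psi> x \<le> exp (- \<gamma> * x) * (a + D / 2 * (exp (\<gamma> * x) - 1))"
      unfolding \<psi>_def by (simp add: mult_left_mono)
    also have "\<dots> = exp (- \<gamma> * x) * a + D / 2 - D / 2 * exp (- \<gamma> * x)"
      by (simp add: algebra_simps flip: exp_add)
    also have "\<dots> \<le> a + D / 2"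
    proof -
      have "exp (- \<gamma> * x) \<le> 1" using \<gamma> x by simp
      then have "exp (- \<gamma> * x) * a \<le> a" using a by (simp add: mult_left_le_one_le)
      moreover have "0 \<le> D / 2 * exp (- \<gamma> * x)" using D by simp
      ultimately show ?thesis by linarith
    qed
    finally show ?thesis .
  qed
  have "D \<le> 2 * a" using \<psi>_le[OF t0] by (simp add: D_def)
  then have "\<phi> t \<le> 2 * a * exp (\<gamma> * t)"
    using \<phi>_le[OF t] by (smt (verit) exp_gt_zero mult_right_mono)
  also have "\<dots> \<le> 2 * a * exp (2 * b * T)"
    using t a b by (auto simp: \<gamma>_def intro!: mult_left_mono)
  finally show ?thesis .
qed

lemma norm_integral_le_const:
  fixes f :: "real \<Rightarrow> 'a::banach"
  assumes "f integrable_on {a..b}" "a \<le> b" "\<And>t. t \<in> {a..b} \<Longrightarrow> norm (f t) \<le> B"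
  shows "norm (integral {a..b} f) \<le> B * (b - a)"
proof -
  have "norm (integral {a..b} f) \<le> integral {a..b} (\<lambda>_. B)"
    by (rule integral_norm_bound_integral) (use assms in auto)
  then show ?thesis using assms(2) by (simp add: mult.commute)
qed

lemma norm_integral_blinfun_apply_le:
  fixes K :: "real \<Rightarrow> ('a::banach \<Rightarrow>\<^sub>L 'b::banach)"
  assumes int: "(\<lambda>s. K s (g s)) integrable_on {a..b}" and \<phi>: "\<phi> integrable_on {a..b}"
    and K: "\<And>s. s \<in> {a..b} \<Longrightarrow> norm (K s) \<le> N"
    and g: "\<And>s. s \<in> {a..b} \<Longrightarrow> norm (g s) \<le> \<phi> s"
  shows "norm (integral {a..b} (\<lambda>s. K s (g s))) \<le> N * integral {a..b} \<phi>"
proof -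
  have "norm (integral {a..b} (\<lambda>s. K s (g s))) \<le> integral {a..b} (\<lambda>s. N * \<phi> s)"
  proof (rule integral_norm_bound_integral[OF int])
    show "(\<lambda>s. N * \<phi> s) integrable_on {a..b}" using integrable_on_cmult_left[OF \<phi>] by simp
    fix s assume s: "s \<in> {a..b}"
    have "norm (K s (g s)) \<le> norm (K s) * norm (g s)" by (rule norm_blinfun)
    also have "\<dots> \<le> N * \<phi> s"
      using K[OF s] g[OF s] by (intro mult_mono) (auto intro: order_trans[OF norm_ge_zero])
    finally show "norm (K s (g s)) \<le> N * \<phi> s" .
  qed
  then show ?thesis by simp
qed

lemma norm_integral_uniform_partition_le:
  fixes f :: "real \<Rightarrow> 'a::banach"
  assumes "f integrable_on {a..a + real n * h}" "0 \<le> h"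
    and "\<And>j. j < n \<Longrightarrow> norm (integral {a + real j * h .. a + real (Suc j) * h} f) \<le> B"
  shows "norm (integral {a..a + real n * h} f) \<le> real n * B"
  using assms
proof (induction n)
  case (Suc n)
  have int: "f integrable_on {a..a + real n * h}"
    by (rule integrable_on_subinterval[OF Suc.prems(1)]) (use Suc.prems(2) in \<open>auto intro: mult_right_mono\<close>)
  have "integral {a..a + real (Suc n) * h} f
      = integral {a..a + real n * h} f + integral {a + real n * h..a + real (Suc n) * h} f"
    by (rule Henstock_Kurzweil_Integration.integral_combine[symmetric])
      (use Suc.prems(1,2) in \<open>auto simp: distrib_right\<close>)
  also have "norm \<dots> \<le> real n * B + B"
    using Suc.IH[OF int Suc.prems(2)] Suc.prems(3) norm_triangle_le by (smt (verit) lessI less_SucI)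
  finally show ?case by (simp add: distrib_right)
qed simp

lemma integral_rescale_to_unit:
  fixes f :: "real \<Rightarrow> 'a::banach"
  assumes "0 \<le> t"
  shows "integral {0..t} f = t *\<^sub>R integral {0..1} (\<lambda>r. f (t * r))"
proof (cases "t = 0")
  case False
  with assms have "(\<lambda>x. x / t) ` {0..t} = {0..1}"
    by (auto simp: image_iff intro!: bexI[of _ "t * _"])
  with integral_stretch_real[of t 0 t f] False assms show ?thesis by simp
qed simp

lemma continuous_on_integral_triangle:
  fixes H :: "real \<times> real \<Rightarrow> 'a::banach"
  assumes H: "continuous_on {(s, t). 0 \<le> s \<and> s \<le> t \<and> t \<le> T} H"
  shows "continuous_on {0..T} (\<lambda>t. integral {0..t} (\<lambda>s. H (s, t)))"
proof -
  have "continuous_on ({0..T} \<times> cbox 0 1) (\<lambda>p. H (fst p * snd p, fst p))"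
    by (rule continuous_on_compose2[OF H])
      (auto intro!: continuous_intros mult_left_le)
  then have "continuous_on ({0..T} \<times> cbox 0 1) (\<lambda>(t, r). H (t * r, t))"
    by (simp add: case_prod_beta)
  from integral_continuous_on_param[OF this]
  have "continuous_on {0..T} (\<lambda>t. integral (cbox 0 1) (\<lambda>r. H (t * r, t)))" .
  then have "continuous_on {0..T} (\<lambda>t. t *\<^sub>R integral {0..1} (\<lambda>r. H (t * r, t)))"
    by (intro continuous_on_scaleR continuous_on_id) simp
  then show ?thesis
  proof (rule continuous_on_eq)
    fix t :: real assume "t \<in> {0..T}"
    then show "t *\<^sub>R integral {0..1} (\<lambda>r. H (t * r, t)) = integral {0..t} (\<lambda>s. H (s, t))"
      using integral_rescale_to_unit[of t "\<lambda>s. H (s, t)"] by simp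
  qed
qed

lemma continuous_on_blinfun_apply_bounded:
  fixes K :: "'a::metric_space \<Rightarrow> ('e::real_normed_vector \<Rightarrow>\<^sub>L 'f::real_normed_vector)"
  assumes K: "\<And>u. continuous_on D (\<lambda>p. K p u)"
    and bounded: "\<And>p. p \<in> D \<Longrightarrow> norm (K p) \<le> N"
    and y: "continuous_on D y"
  shows "continuous_on D (\<lambda>p. K p (y p))"
  unfolding continuous_on_def
proof
  fix x assume x: "x \<in> D"
  have "((\<lambda>p. y p - y x) \<longlongrightarrow> 0) (at x within D)"
    using y x by (simp add: continuous_on_def LIM_zero)
  then have "((\<lambda>p. N * norm (y p - y x)) \<longlongrightarrow> 0) (at x within D)"
    by (intro tendsto_mult_right_zero tendsto_norm_zero)
  then have "((\<lambda>p. K p (y p - y x)) \<longlongrightarrow> 0) (at x within D)"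
    by (rule Lim_null_comparison[rotated])
      (auto simp: eventually_at_filter intro!: always_eventually order_trans[OF norm_blinfun]
        mult_right_mono bounded)
  moreover have "((\<lambda>p. K p (y x)) \<longlongrightarrow> K x (y x)) (at x within D)"
    using K[of "y x"] x by (simp add: continuous_on_def)
  ultimately have "((\<lambda>p. K p (y p - y x) + K p (y x)) \<longlongrightarrow> 0 + K x (y x)) (at x within D)"
    by (rule tendsto_add)
  then show "((\<lambda>p. K p (y p)) \<longlongrightarrow> K x (y x)) (at x within D)"
    by (simp add: blinfun.diff_right)
qed

lemma norm_integral_le_initial_and_pieces:
  fixes f :: "real \<Rightarrow> 'a::banach"
  assumes f: "f integrable_on {0..h + real m * h}" and h: "0 \<le> h"
    and initial: "\<And>\<tau>. \<tau> \<in> {0..h} \<Longrightarrow> norm (f \<tau>) \<le> D"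
    and pieces: "\<And>j. j < m \<Longrightarrow> norm (integral {h + real j * h .. h + real (Suc j) * h} f) \<le> B"
  shows "norm (integral {0..h + real m * h} f) \<le> D * h + real m * B"
proof -
  have "integral {0..h + real m * h} f = integral {0..h} f + integral {h..h + real m * h} f"
    by (rule Henstock_Kurzweil_Integration.integral_combine[symmetric]) (use f h in auto)
  also have "norm \<dots> \<le> D * (h - 0) + real m * B"
  proof (rule norm_triangle_le[OF add_mono])
    show "norm (integral {0..h} f) \<le> D * (h - 0)"
      by (rule norm_integral_le_const[OF integrable_on_subinterval[OF f] h initial]) (use h in auto)
    show "norm (integral {h..h + real m * h} f) \<le> real m * B"
      by (rule norm_integral_uniform_partition_le[OF integrable_on_subinterval[OF f] h pieces])
        (use h in auto)
  qed
  finally show ?thesis by simp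
qed

section \<open>Volterra integral equations\<close>

lemma continuous_on_compose_time_dependent:
  assumes G: "continuous_on (A \<times> UNIV) (\<lambda>(t, v). G t v)"
    and g: "continuous_on S g" and w: "continuous_on S w" and "g ` S \<subseteq> A"
  shows "continuous_on S (\<lambda>x. G (g x) (w x))"
proof -
  have "continuous_on S (\<lambda>x. (\<lambda>(t, v). G t v) (g x, w x))"
    by (rule continuous_on_compose2[OF G]) (use assms in \<open>auto intro!: continuous_intros\<close>)
  then show ?thesis by simp
qed

lemma continuous_on_kernel_apply:
  fixes K :: "real \<Rightarrow> real \<Rightarrow> ('e::banach \<Rightarrow>\<^sub>L 'e)"
  assumes Kc: "\<And>u. continuous_on {(s, t). 0 \<le> s \<and> s \<le> t} (\<lambda>(s, t). K t s u)"
    and KN: "\<And>s t. 0 \<le> s \<Longrightarrow> s \<le> t \<Longrightarrow> t \<le> T \<Longrightarrow> norm (K t s) \<le> N"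
    and g: "continuous_on {0..T} g"
  shows "continuous_on {(s, t). 0 \<le> s \<and> s \<le> t \<and> t \<le> T} (\<lambda>(s, t). K t s (g s))"
proof -
  have "continuous_on {(s, t). 0 \<le> s \<and> s \<le> t \<and> t \<le> T} (\<lambda>p. K (snd p) (fst p) (g (fst p)))"
  proof (rule continuous_on_blinfun_apply_bounded)
    fix u
    have "continuous_on {(s, t). 0 \<le> s \<and> s \<le> t \<and> t \<le> T} (\<lambda>(s, t). K t s u)"
      by (rule continuous_on_subset[OF Kc]) auto
    then show "continuous_on {(s, t). 0 \<le> s \<and> s \<le> t \<and> t \<le> T} (\<lambda>p. K (snd p) (fst p) u)"
      by (simp add: case_prod_beta)
    show "continuous_on {(s, t). 0 \<le> s \<and> s \<le> t \<and> t \<le> T} (\<lambda>p. g (fst p))"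
      by (rule continuous_on_compose2[OF g]) (auto intro!: continuous_intros)
  qed (auto intro: KN)
  then show ?thesis by (simp add: case_prod_beta)
qed

lemma kernel_apply_integrable_on:
  fixes K :: "real \<Rightarrow> real \<Rightarrow> ('e::banach \<Rightarrow>\<^sub>L 'e)"
  assumes Kc: "\<And>u. continuous_on {(s, t). 0 \<le> s \<and> s \<le> t} (\<lambda>(s, t). K t s u)"
    and KN: "\<And>s t. 0 \<le> s \<Longrightarrow> s \<le> t \<Longrightarrow> t \<le> T \<Longrightarrow> norm (K t s) \<le> N"
    and g: "continuous_on {0..T} g" and t: "t \<in> {0..T}"
  shows "(\<lambda>s. K t s (g s)) integrable_on {0..t}"
proof -
  have "continuous_on {0..t} (\<lambda>s. (\<lambda>(s, t). K t s (g s)) (s, t))"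
    by (rule continuous_on_compose2[OF continuous_on_kernel_apply[OF Kc KN g]])
      (use t in \<open>auto intro!: continuous_intros\<close>)
  then show ?thesis by (simp add: integrable_continuous_real)
qed

lemma continuous_on_volterra_integral:
  fixes K :: "real \<Rightarrow> real \<Rightarrow> ('e::banach \<Rightarrow>\<^sub>L 'e)"
  assumes Kc: "\<And>u. continuous_on {(s, t). 0 \<le> s \<and> s \<le> t} (\<lambda>(s, t). K t s u)"
    and KN: "\<And>s t. 0 \<le> s \<Longrightarrow> s \<le> t \<Longrightarrow> t \<le> T \<Longrightarrow> norm (K t s) \<le> N"
    and g: "continuous_on {0..T} g"
  shows "continuous_on {0..T} (\<lambda>t. integral {0..t} (\<lambda>s. K t s (g s)))"
  using continuous_on_integral_triangle[OF continuous_on_kernel_apply[OF Kc KN g]] by simp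

definition volterra_solution ::
  "(real \<Rightarrow> real \<Rightarrow> ('e::banach \<Rightarrow>\<^sub>L 'e)) \<Rightarrow> (real \<Rightarrow> 'e \<Rightarrow> 'e) \<Rightarrow> (real \<Rightarrow> 'e) \<Rightarrow> real \<Rightarrow> (real \<Rightarrow> 'e) \<Rightarrow> bool"
  where "volterra_solution K G a T w \<longleftrightarrow> continuous_on {0..T} w \<and>
    (\<forall>t\<in>{0..T}. w t = a t + integral {0..t} (\<lambda>s. K t s (G s (w s))))"

text \<open>Banach's fixed point theorem in the space of bounded continuous functions, with the
  Bielecki weight \<open>e\<^sup>\<gamma>\<^sup>t\<close> built in: \<open>z\<close> stands for \<open>w(t) = e\<^sup>\<gamma>\<^sup>t z(t)\<close>. The choice
  \<open>\<gamma> = 2NL + 1\<close> makes the Picard operator a contraction with constant \<open>1/2\<close> on all of \<open>[0,T]\<close>.\<close>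

lemma volterra_solution_exists_lipschitz:
  fixes K :: "real \<Rightarrow> real \<Rightarrow> ('e::banach \<Rightarrow>\<^sub>L 'e)" and G :: "real \<Rightarrow> 'e \<Rightarrow> 'e"
  assumes Kc: "\<And>u. continuous_on {(s, t). 0 \<le> s \<and> s \<le> t} (\<lambda>(s, t). K t s u)"
    and KN: "\<And>s t. 0 \<le> s \<Longrightarrow> s \<le> t \<Longrightarrow> t \<le> T \<Longrightarrow> norm (K t s) \<le> N"
    and N: "0 \<le> N" and T: "0 \<le> T"
    and Gc: "continuous_on ({0..T} \<times> UNIV) (\<lambda>(t, v). G t v)"
    and GL: "\<And>t x y. t \<in> {0..T} \<Longrightarrow> dist (G t x) (G t y) \<le> L * dist x y" and L: "0 \<le> L"
    and a: "continuous_on {0..T} a"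
  shows "\<exists>w. volterra_solution K G a T w"
proof -
  define \<gamma> where "\<gamma> = 2 * N * L + 1"
  have \<gamma>: "\<gamma> > 0" unfolding \<gamma>_def using mult_nonneg_nonneg[OF N L] by linarith
  define g where "g z s = G s (exp (\<gamma> * s) *\<^sub>R apply_bcontfun z s)" for z :: "real \<Rightarrow>\<^sub>C 'e" and s
  define f where "f z t = exp (- \<gamma> * t) *\<^sub>R (a t + integral {0..t} (\<lambda>s. K t s (g z s)))" for z t
  have gc: "continuous_on {0..T} (g z)" for z
    unfolding g_def by (rule continuous_on_compose_time_dependent[OF Gc]) (auto intro!: continuous_intros)
  have int: "(\<lambda>s. K t s (g z s)) integrable_on {0..t}" if "t \<in> {0..T}" for z t
    by (rule kernel_apply_integrable_on[OF Kc KN gc that])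
  have "\<exists>h::real \<Rightarrow>\<^sub>C 'e. \<forall>x. h x = f z (clamp 0 T x)" for z
  proof -
    have "continuous_on {0..T} (f z)"
      unfolding f_def by (intro continuous_intros a continuous_on_volterra_integral[OF Kc KN gc])
    then show ?thesis
      using continuous_on_cbox_bcontfunE[of 0 T "f z"] by (metis cbox_interval)
  qed
  then obtain \<Psi> where \<Psi>: "\<And>z x. apply_bcontfun (\<Psi> z) x = f z (clamp 0 T x)" by metis
  have "dist (\<Psi> z1) (\<Psi> z2) \<le> 1/2 * dist z1 z2" for z1 z2
  proof (rule dist_bound)
    fix x
    define t where "t = clamp 0 T x"
    have t: "t \<in> {0..T}" using clamp_in_interval[of 0 T x] T by (simp add: t_def cbox_interval)
    define D where "D = dist z1 z2"
    have "norm (integral {0..t} (\<lambda>s. K t s (g z1 s - g z2 s))) \<le> N * integral {0..t} (\<lambda>s. L * D * exp (\<gamma> * s))"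
    proof (rule norm_integral_blinfun_apply_le)
      show "(\<lambda>s. K t s (g z1 s - g z2 s)) integrable_on {0..t}"
        using integrable_diff[OF int[OF t] int[OF t]] by (simp add: blinfun.diff_right)
      show "(\<lambda>s. L * D * exp (\<gamma> * s)) integrable_on {0..t}"
        by (intro integrable_continuous_real continuous_intros)
      fix s assume s: "s \<in> {0..t}"
      then show "norm (K t s) \<le> N" using t by (auto intro: KN)
      have "norm (g z1 s - g z2 s) \<le> L * norm (exp (\<gamma> * s) *\<^sub>R z1 s - exp (\<gamma> * s) *\<^sub>R z2 s)"
        using GL[of s] s t by (simp add: g_def dist_norm)
      also have "\<dots> = L * (exp (\<gamma> * s) * dist (z1 s) (z2 s))"
        by (simp add: dist_norm flip: scaleR_diff_right)
      also have "\<dots> \<le> L * (exp (\<gamma> * s) * D)"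
        using dist_bounded[of z1 s z2] L by (simp add: D_def mult_left_mono)
      finally show "norm (g z1 s - g z2 s) \<le> L * D * exp (\<gamma> * s)" by (simp only: ac_simps)
    qed
    also have "\<dots> = N * L * D * ((exp (\<gamma> * t) - 1) / \<gamma>)"
      using integral_unique[OF has_integral_mult_right[OF has_integral_exp_scaled[OF \<gamma>], of t "L * D"]] t
      by simp
    finally have I: "norm (integral {0..t} (\<lambda>s. K t s (g z1 s)) - integral {0..t} (\<lambda>s. K t s (g z2 s)))
        \<le> N * L * D * ((exp (\<gamma> * t) - 1) / \<gamma>)"
      by (simp add: blinfun.diff_right integral_diff[OF int[OF t] int[OF t]])
    have "dist (f z1 t) (f z2 t)
        = exp (- \<gamma> * t) * norm (integral {0..t} (\<lambda>s. K t s (g z1 s)) - integral {0..t} (\<lambda>s. K t s (g z2 s)))"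
      unfolding f_def dist_norm by (simp flip: scaleR_diff_right)
    also have "\<dots> \<le> exp (- \<gamma> * t) * (N * L * D * ((exp (\<gamma> * t) - 1) / \<gamma>))"
      by (rule mult_left_mono[OF I]) simp
    also have "\<dots> = N * L * D * ((1 - exp (- \<gamma> * t)) / \<gamma>)"
      by (simp add: field_simps flip: exp_add)
    also have "\<dots> \<le> N * L * D / \<gamma>"
      using N L \<gamma> by (simp add: D_def divide_right_mono mult_left_le)
    also have "\<dots> \<le> 1/2 * D"
      using N L \<gamma> by (simp add: D_def \<gamma>_def field_simps mult_right_mono)
    finally show "dist (\<Psi> z1 x) (\<Psi> z2 x) \<le> 1/2 * dist z1 z2"
      by (simp add: \<Psi> t_def D_def)
  qed
  then obtain z where z: "\<Psi> z = z"
    using banach_fix_type[of "1/2" \<Psi>] by auto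
  show ?thesis
    unfolding volterra_solution_def
  proof (intro exI[of _ "\<lambda>s. exp (\<gamma> * s) *\<^sub>R z s"] conjI ballI)
    show "continuous_on {0..T} (\<lambda>s. exp (\<gamma> * s) *\<^sub>R z s)"
      by (intro continuous_intros continuous_on_apply_bcontfun)
    fix t assume t: "t \<in> {0..T}"
    then have "z t = f z t" using \<Psi>[of z t] z by (simp add: clamp_cancel_cbox[of t 0 T, simplified])
    then show "exp (\<gamma> * t) *\<^sub>R z t = a t + integral {0..t} (\<lambda>s. K t s (G s (exp (\<gamma> * s) *\<^sub>R z s)))"
      by (simp add: f_def g_def flip: exp_add)
  qed
qed

definition radial_retraction :: "real \<Rightarrow> 'a::real_normed_vector \<Rightarrow> 'a" where
  "radial_retraction \<rho> v = (if norm v \<le> \<rho> then v else (\<rho> / norm v) *\<^sub>R v)"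

lemma norm_radial_retraction_le:
  assumes "0 \<le> \<rho>"
  shows "norm (radial_retraction \<rho> v) \<le> norm v" "norm (radial_retraction \<rho> v) \<le> \<rho>"
  using assms by (auto simp: radial_retraction_def divide_le_eq_1)

lemma radial_retraction_id: "norm v \<le> \<rho> \<Longrightarrow> radial_retraction \<rho> v = v"
  by (simp add: radial_retraction_def)

lemma norm_radial_retraction_diff_le:
  fixes x y :: "'a::real_normed_vector"
  assumes \<rho>: "0 < \<rho>" and xy: "norm y \<le> norm x"
  shows "norm (radial_retraction \<rho> x - radial_retraction \<rho> y) \<le> 2 * norm (x - y)"
proof -
  have tri: "norm x - norm y \<le> norm (x - y)" by (rule norm_triangle_ineq2)
  consider "norm x \<le> \<rho>" | "norm y \<le> \<rho>" "\<rho> < norm x" | "\<rho> < norm y" using xy by linarith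
  then show ?thesis
  proof cases
    case 1
    then show ?thesis using xy by (simp add: radial_retraction_def)
  next
    case 2
    then have "x \<noteq> 0" using \<rho> by auto
    have "norm ((\<rho> / norm x - 1) *\<^sub>R x) = (1 - \<rho> / norm x) * norm x"
      using 2 by (simp add: divide_le_eq_1)
    also have "\<dots> = norm x - \<rho>"
      using \<open>x \<noteq> 0\<close> by (simp add: field_simps)
    finally have "norm ((\<rho> / norm x - 1) *\<^sub>R x) = norm x - \<rho>" .
    moreover have "radial_retraction \<rho> x - radial_retraction \<rho> y = (\<rho> / norm x - 1) *\<^sub>R x + (x - y)"
      using 2 by (simp add: radial_retraction_def algebra_simps)
    ultimately show ?thesis
      using 2 tri norm_triangle_ineq[of "(\<rho> / norm x - 1) *\<^sub>R x" "x - y"] by simp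
  next
    case 3
    then have y: "norm y > 0" using \<rho> by linarith
    define q where "q = norm x / norm y"
    have q: "q \<ge> 1" using xy y by (simp add: q_def)
    have x: "x \<noteq> 0" using xy y by auto
    have "radial_retraction \<rho> x - radial_retraction \<rho> y = (\<rho> / norm x) *\<^sub>R ((x - y) + (1 - q) *\<^sub>R y)"
      using 3 xy x y by (simp add: radial_retraction_def q_def algebra_simps)
    also have "norm \<dots> \<le> norm ((x - y) + (1 - q) *\<^sub>R y)"
      using 3 xy \<rho> by (simp only: norm_scaleR) (intro mult_left_le_one_le, auto simp: divide_le_eq_1)
    also have "\<dots> \<le> norm (x - y) + norm ((1 - q) *\<^sub>R y)"
      by (rule norm_triangle_ineq)
    also have "norm ((1 - q) *\<^sub>R y) = norm x - norm y"
      using q y by (simp add: q_def field_simps)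
    finally show ?thesis using tri by linarith
  qed
qed

lemma dist_radial_retraction_le:
  fixes x y :: "'a::real_normed_vector"
  assumes "0 < \<rho>"
  shows "dist (radial_retraction \<rho> x) (radial_retraction \<rho> y) \<le> 2 * dist x y"
  using norm_radial_retraction_diff_le[OF assms, of x y] norm_radial_retraction_diff_le[OF assms, of y x]
  by (cases "norm y \<le> norm x") (auto simp: dist_norm norm_minus_commute)

lemma continuous_on_radial_retraction: "0 < \<rho> \<Longrightarrow> continuous_on S (radial_retraction \<rho>)"
  by (rule lipschitz_on_continuous_on[of 2]) (auto simp: lipschitz_on_def dist_radial_retraction_le)

lemma volterra_solution_norm_bound:
  fixes K :: "real \<Rightarrow> real \<Rightarrow> ('e::banach \<Rightarrow>\<^sub>L 'e)"
  assumes w: "volterra_solution K G a T w"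
    and int: "\<And>t. t \<in> {0..T} \<Longrightarrow> (\<lambda>s. K t s (G s (w s))) integrable_on {0..t}"
    and KN: "\<And>s t. 0 \<le> s \<Longrightarrow> s \<le> t \<Longrightarrow> t \<le> T \<Longrightarrow> norm (K t s) \<le> N" and N: "0 \<le> N"
    and growth: "\<And>s. s \<in> {0..T} \<Longrightarrow> norm (G s (w s)) \<le> c * (1 + norm (w s))" and c: "0 \<le> c"
    and a: "\<And>t. t \<in> {0..T} \<Longrightarrow> norm (a t) \<le> A"
    and t: "t \<in> {0..T}"
  shows "norm (w t) \<le> 2 * (A + N * c * T) * exp (2 * (N * c + 1) * T)"
proof -
  have A: "0 \<le> A" using a[OF t] norm_ge_zero order_trans by blast
  have Nc: "0 \<le> N * c" using N c by simp
  have wc: "continuous_on {0..T} (\<lambda>s. norm (w s))"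
    using w by (auto simp: volterra_solution_def intro!: continuous_intros)
  show ?thesis
  proof (rule gronwall_exp_bound[OF wc _ _ _ _ t, of "A + N * c * T" "N * c + 1"])
    fix x assume x: "x \<in> {0..T}"
    have sub: "{0..x} \<subseteq> {0..T}" using x by auto
    have wi: "(\<lambda>s. norm (w s)) integrable_on {0..x}"
      by (rule integrable_continuous_real[OF continuous_on_subset[OF wc sub]])
    have ci: "(\<lambda>s. c * (1 + norm (w s))) integrable_on {0..x}"
      by (intro integrable_continuous_real continuous_intros continuous_on_subset[OF wc sub])
    have "norm (integral {0..x} (\<lambda>s. K x s (G s (w s)))) \<le> N * integral {0..x} (\<lambda>s. c * (1 + norm (w s)))"
      by (rule norm_integral_blinfun_apply_le[OF int[OF x]])
        (use x ci in \<open>auto intro!: KN growth\<close>)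
    also have "\<dots> = N * c * (x + integral {0..x} (\<lambda>s. norm (w s)))"
      using integral_add[OF integrable_const_ivl wi, of 1] x by simp
    also have "\<dots> = N * c * x + N * c * integral {0..x} (\<lambda>s. norm (w s))"
      by (simp add: algebra_simps)
    also have "\<dots> \<le> N * c * T + N * c * integral {0..x} (\<lambda>s. norm (w s))"
      using x Nc by (simp add: mult_left_mono)
    finally have "norm (w x) \<le> A + (N * c * T + N * c * integral {0..x} (\<lambda>s. norm (w s)))"
      using w x a[OF x] norm_triangle_le[of "a x"] by (auto simp: volterra_solution_def)
    moreover have "0 \<le> integral {0..x} (\<lambda>s. norm (w s))" by (rule integral_nonneg[OF wi]) simp
    ultimately show "norm (w x) \<le> A + N * c * T + (N * c + 1) * integral {0..x} (\<lambda>s. norm (w s))"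
      by (simp add: algebra_simps)
  qed (use A Nc t in auto)
qed

text \<open>For a locally Lipschitz nonlinearity of linear growth, solve the equation with \<open>G\<close>
  truncated outside a ball of radius \<open>\<rho>\<close> larger than the a priori bound; the solution of the
  truncated problem never leaves that ball, so it solves the original one.\<close>

lemma volterra_solution_exists:
  fixes K :: "real \<Rightarrow> real \<Rightarrow> ('e::banach \<Rightarrow>\<^sub>L 'e)" and G :: "real \<Rightarrow> 'e \<Rightarrow> 'e"
  assumes Kc: "\<And>u. continuous_on {(s, t). 0 \<le> s \<and> s \<le> t} (\<lambda>(s, t). K t s u)"
    and KN: "\<And>s t. 0 \<le> s \<Longrightarrow> s \<le> t \<Longrightarrow> t \<le> T \<Longrightarrow> norm (K t s) \<le> N"
    and N: "0 \<le> N" and T: "0 \<le> T"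
    and Gc: "continuous_on ({0..T} \<times> UNIV) (\<lambda>(t, v). G t v)"
    and Glip: "\<And>B. bounded B \<Longrightarrow> \<exists>L. \<forall>t\<in>{0..T}. \<forall>x\<in>B. \<forall>y\<in>B. dist (G t x) (G t y) \<le> L * dist x y"
    and growth: "\<And>t v. t \<in> {0..T} \<Longrightarrow> norm (G t v) \<le> c * (1 + norm v)" and c: "0 \<le> c"
    and ac: "continuous_on {0..T} a" and a: "\<And>t. t \<in> {0..T} \<Longrightarrow> norm (a t) \<le> A"
  shows "\<exists>w. volterra_solution K G a T w"
proof -
  define \<rho> where "\<rho> = 2 * (A + N * c * T) * exp (2 * (N * c + 1) * T) + 1"
  have "norm (a 0) \<le> A" using a T by simp
  then have "0 \<le> A" using norm_ge_zero[of "a 0"] by linarith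
  then have \<rho>: "0 < \<rho>" unfolding \<rho>_def using N c T by (intro add_nonneg_pos) auto
  obtain L where L: "\<forall>t\<in>{0..T}. \<forall>x\<in>cball 0 \<rho>. \<forall>y\<in>cball 0 \<rho>. dist (G t x) (G t y) \<le> L * dist x y"
    using Glip[of "cball 0 \<rho>"] by auto
  define G' where "G' t v = G t (radial_retraction \<rho> v)" for t v
  have G'c: "continuous_on ({0..T} \<times> UNIV) (\<lambda>(t, v). G' t v)"
    unfolding G'_def case_prod_beta
    by (rule continuous_on_compose_time_dependent[OF Gc])
      (auto intro!: continuous_intros continuous_on_compose2[OF continuous_on_radial_retraction[OF \<rho>]])
  have G'L: "dist (G' t x) (G' t y) \<le> (2 * max L 0) * dist x y" if t: "t \<in> {0..T}" for t x y
  proof -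
    have "radial_retraction \<rho> v \<in> cball 0 \<rho>" for v
      using norm_radial_retraction_le(2)[of \<rho> v] \<rho> by simp
    then have "dist (G' t x) (G' t y) \<le> L * dist (radial_retraction \<rho> x) (radial_retraction \<rho> y)"
      using L t unfolding G'_def by blast
    also have "\<dots> \<le> max L 0 * (2 * dist x y)"
      by (intro mult_mono dist_radial_retraction_le[OF \<rho>]) auto
    finally show ?thesis by simp
  qed
  obtain w where w: "volterra_solution K G' a T w"
    using volterra_solution_exists_lipschitz[OF Kc KN N T G'c G'L _ ac] by auto
  have w_le: "norm (w t) < \<rho>" if "t \<in> {0..T}" for t
  proof -
    have gc: "continuous_on {0..T} (\<lambda>s. G' s (w s))"
      using w by (auto simp: volterra_solution_def intro: continuous_on_compose_time_dependent[OF G'c])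
    have gw: "norm (G' s (w s)) \<le> c * (1 + norm (w s))" if "s \<in> {0..T}" for s
    proof -
      have "norm (G' s (w s)) \<le> c * (1 + norm (radial_retraction \<rho> (w s)))"
        unfolding G'_def using growth[OF that] .
      also have "\<dots> \<le> c * (1 + norm (w s))"
        using norm_radial_retraction_le(1)[of \<rho> "w s"] \<rho> c by (simp add: mult_left_mono)
      finally show ?thesis .
    qed
    have "norm (w t) \<le> 2 * (A + N * c * T) * exp (2 * (N * c + 1) * T)"
      by (rule volterra_solution_norm_bound[OF w kernel_apply_integrable_on[OF Kc KN gc] KN N gw c a that])
    then show ?thesis by (simp add: \<rho>_def)
  qed
  have "volterra_solution K G a T w"
    unfolding volterra_solution_def
  proof (intro conjI ballI)
    show "continuous_on {0..T} w" using w by (simp add: volterra_solution_def)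
    fix t assume t: "t \<in> {0..T}"
    have "integral {0..t} (\<lambda>s. K t s (G' s (w s))) = integral {0..t} (\<lambda>s. K t s (G s (w s)))"
      by (rule integral_cong) (use t w_le in \<open>auto simp: G'_def radial_retraction_id less_imp_le\<close>)
    then show "w t = a t + integral {0..t} (\<lambda>s. K t s (G s (w s)))"
      using w t by (simp add: volterra_solution_def)
  qed
  then show ?thesis by blast
qed

lemma volterra_solution_unique:
  fixes K :: "real \<Rightarrow> real \<Rightarrow> ('e::banach \<Rightarrow>\<^sub>L 'e)" and G :: "real \<Rightarrow> 'e \<Rightarrow> 'e"
  assumes Kc: "\<And>u. continuous_on {(s, t). 0 \<le> s \<and> s \<le> t} (\<lambda>(s, t). K t s u)"
    and KN: "\<And>s t. 0 \<le> s \<Longrightarrow> s \<le> t \<Longrightarrow> t \<le> T \<Longrightarrow> norm (K t s) \<le> N" and N: "0 \<le> N"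
    and Gc: "continuous_on ({0..T} \<times> UNIV) (\<lambda>(t, v). G t v)"
    and Glip: "\<And>B. bounded B \<Longrightarrow> \<exists>L. \<forall>t\<in>{0..T}. \<forall>x\<in>B. \<forall>y\<in>B. dist (G t x) (G t y) \<le> L * dist x y"
    and w1: "volterra_solution K G a T w1" and w2: "volterra_solution K G a T w2"
    and t: "t \<in> {0..T}"
  shows "w1 t = w2 t"
proof -
  have w1c: "continuous_on {0..T} w1" and w2c: "continuous_on {0..T} w2"
    using w1 w2 by (simp_all add: volterra_solution_def)
  have "bounded (w1 ` {0..T} \<union> w2 ` {0..T})"
    using compact_continuous_image[OF w1c compact_Icc] compact_continuous_image[OF w2c compact_Icc]
    by (simp add: compact_imp_bounded)
  then obtain L0 where L0: "\<forall>t\<in>{0..T}. \<forall>x\<in>w1 ` {0..T} \<union> w2 ` {0..T}.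
      \<forall>y\<in>w1 ` {0..T} \<union> w2 ` {0..T}. dist (G t x) (G t y) \<le> L0 * dist x y"
    using Glip by blast
  define L where "L = max L0 0"
  have "0 < N * L + 1" using mult_nonneg_nonneg[OF N, of L] by (simp add: L_def)
  have L: "norm (G s (w1 s) - G s (w2 s)) \<le> L * norm (w1 s - w2 s)" if "s \<in> {0..T}" for s
  proof -
    have "norm (G s (w1 s) - G s (w2 s)) \<le> L0 * norm (w1 s - w2 s)"
      using L0 that by (auto simp: dist_norm)
    also have "\<dots> \<le> L * norm (w1 s - w2 s)" by (simp add: L_def mult_right_mono)
    finally show ?thesis .
  qed
  have int: "(\<lambda>s. K x s (G s (w s))) integrable_on {0..x}" if "continuous_on {0..T} w" "x \<in> {0..T}" for w x
    by (rule kernel_apply_integrable_on[OF Kc KN continuous_on_compose_time_dependent[OF Gc] that(2)])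
      (use that(1) in \<open>auto intro: continuous_intros\<close>)
  define \<phi> where "\<phi> s = norm (w1 s - w2 s)" for s
  have \<phi>c: "continuous_on {0..T} \<phi>" unfolding \<phi>_def by (intro continuous_intros w1c w2c)
  show ?thesis
  proof -
    have "\<phi> x \<le> 0 + (N * L + 1) * integral {0..x} \<phi>" if x: "x \<in> {0..T}" for x
    proof -
      have \<phi>i: "\<phi> integrable_on {0..x}"
        by (rule integrable_continuous_real[OF continuous_on_subset[OF \<phi>c]]) (use x in auto)
      have L\<phi>i: "(\<lambda>s. L * \<phi> s) integrable_on {0..x}"
        using integrable_on_cmult_left[OF \<phi>i] by simp
      have "w1 x - w2 x = integral {0..x} (\<lambda>s. K x s (G s (w1 s) - G s (w2 s)))"
        using w1 w2 x integral_diff[OF int[OF w1c x] int[OF w2c x]]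
        by (simp add: volterra_solution_def blinfun.diff_right)
      then have "\<phi> x = norm (integral {0..x} (\<lambda>s. K x s (G s (w1 s) - G s (w2 s))))"
        by (simp add: \<phi>_def)
      also have "\<dots> \<le> N * integral {0..x} (\<lambda>s. L * \<phi> s)"
        by (intro norm_integral_blinfun_apply_le)
          (use x L\<phi>i integrable_diff[OF int[OF w1c x] int[OF w2c x]] in
            \<open>auto simp: blinfun.diff_right \<phi>_def intro!: KN L\<close>)
      also have "\<dots> \<le> (N * L + 1) * integral {0..x} \<phi>"
      proof -
        have "0 \<le> integral {0..x} \<phi>" by (rule integral_nonneg[OF \<phi>i]) (simp add: \<phi>_def)
        then show ?thesis by (simp add: distrib_right)
      qed
      finally show ?thesis by simp
    qed
    then have "\<phi> t \<le> 2 * 0 * exp (2 * (N * L + 1) * T)"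
      by (intro gronwall_exp_bound[OF \<phi>c _ _ _ _ t]) (use \<open>0 < N * L + 1\<close> in \<open>auto simp: \<phi>_def\<close>)
    then show ?thesis by (simp add: \<phi>_def)
  qed
qed

lemma continuous_on_atLeast_from_Icc:
  fixes w :: "real \<Rightarrow> 'a::topological_space"
  assumes "\<And>k::nat. continuous_on {0..real k} w"
  shows "continuous_on {0..} w"
  unfolding continuous_on_eq_continuous_within
proof
  fix x :: real assume x: "x \<in> {0..}"
  define k where "k = nat \<lceil>x\<rceil> + 1"
  have xk: "x < real k" using x by (simp add: k_def) linarith
  then have "continuous (at x within {0..real k}) w"
    using assms[of k] x by (auto simp: continuous_on_eq_continuous_within)
  moreover have "at x within {0..} = at x within {0..real k}"
    by (rule at_within_nhd[of x "{..<real k}"]) (use xk x in auto)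
  ultimately show "continuous (at x within {0..}) w" by simp
qed

lemma volterra_solution_exists_global:
  fixes K :: "real \<Rightarrow> real \<Rightarrow> ('e::banach \<Rightarrow>\<^sub>L 'e)" and G :: "real \<Rightarrow> 'e \<Rightarrow> 'e"
  assumes Kc: "\<And>u. continuous_on {(s, t). 0 \<le> s \<and> s \<le> t} (\<lambda>(s, t). K t s u)"
    and KN: "\<And>T. \<exists>N\<ge>0. \<forall>s t. 0 \<le> s \<longrightarrow> s \<le> t \<longrightarrow> t \<le> T \<longrightarrow> norm (K t s) \<le> N"
    and Gc: "continuous_on ({0..} \<times> UNIV) (\<lambda>(t, v). G t v)"
    and Glip: "\<And>B. bounded B \<Longrightarrow> \<exists>L. \<forall>t\<ge>0. \<forall>x\<in>B. \<forall>y\<in>B. dist (G t x) (G t y) \<le> L * dist x y"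
    and growth: "\<And>t v. 0 \<le> t \<Longrightarrow> norm (G t v) \<le> c * (1 + norm v)" and c: "0 \<le> c"
  shows "\<exists>w. continuous_on {0..} w \<and>
    (\<forall>t\<ge>0. ((\<lambda>s. K t s (G s (w s))) has_integral (w t - K t 0 u0)) {0..t})"
proof -
  define a where "a t = K t 0 u0" for t
  have GcT: "continuous_on ({0..T} \<times> UNIV) (\<lambda>(t, v). G t v)" for T
    by (rule continuous_on_subset[OF Gc]) auto
  have GlipT: "\<exists>L. \<forall>t\<in>{0..T}. \<forall>x\<in>B. \<forall>y\<in>B. dist (G t x) (G t y) \<le> L * dist x y"
    if "bounded B" for B T
    using Glip[OF that] by (metis atLeastAtMost_iff)
  have "\<forall>k::nat. \<exists>N\<ge>0. \<forall>s t. 0 \<le> s \<longrightarrow> s \<le> t \<longrightarrow> t \<le> real k \<longrightarrow> norm (K t s) \<le> N"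
    using KN by blast
  then obtain N where N: "\<And>k. 0 \<le> N k" "\<And>k s t. 0 \<le> s \<Longrightarrow> s \<le> t \<Longrightarrow> t \<le> real k \<Longrightarrow> norm (K t s) \<le> N k"
    unfolding choice_iff by blast
  have "\<exists>w. volterra_solution K G a (real k) w" for k :: nat
  proof (rule volterra_solution_exists[OF Kc N(2) N(1) _ GcT GlipT growth c])
    have "continuous_on {0..real k} (\<lambda>t. (\<lambda>(s, t). K t s u0) (0, t))"
      by (rule continuous_on_compose2[OF Kc]) (auto intro!: continuous_intros)
    then show "continuous_on {0..real k} a" by (simp add: a_def)
    show "norm (a t) \<le> N k * norm u0" if "t \<in> {0..real k}" for t
      using that N(2)[of 0 t k] norm_blinfun[of "K t 0" u0] mult_right_mono[of "norm (K t 0)" "N k" "norm u0"]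
      by (simp add: a_def)
  qed auto
  then obtain W where W: "\<And>k. volterra_solution K G a (real k) (W k)" by metis
  have W_agree: "W k t = W m t" if "k \<le> m" "t \<in> {0..real k}" for k m t
  proof (rule volterra_solution_unique[OF Kc N(2) N(1) GcT GlipT W])
    show "volterra_solution K G a (real k) (W m)"
      using W[of m] that(1) by (auto simp: volterra_solution_def intro: continuous_on_subset)
  qed (use that in auto)
  define w where "w t = W (nat \<lceil>t\<rceil>) t" for t
  have wW: "w t = W k t" if "t \<in> {0..real k}" for t k
    unfolding w_def using that
    by (intro W_agree) (auto simp: nat_le_iff ceiling_le_iff of_nat_nat le_of_int_ceiling)
  have w: "volterra_solution K G a (real k) w" for k
    unfolding volterra_solution_def
  proof (intro conjI ballI)
    have "continuous_on {0..real k} (W k)" using W[of k] by (simp add: volterra_solution_def)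
    then show "continuous_on {0..real k} w" by (rule continuous_on_eq) (metis wW)
    fix t assume t: "t \<in> {0..real k}"
    have "integral {0..t} (\<lambda>s. K t s (G s (w s))) = integral {0..t} (\<lambda>s. K t s (G s (W k s)))"
    proof (rule integral_cong)
      fix s assume "s \<in> {0..t}"
      with t have "s \<in> {0..real k}" by auto
      then show "K t s (G s (w s)) = K t s (G s (W k s))" by (simp add: wW[of s k])
    qed
    then show "w t = a t + integral {0..t} (\<lambda>s. K t s (G s (w s)))"
      using W[of k] t wW[OF t] by (simp add: volterra_solution_def)
  qed
  have "continuous_on {0..} w"
    using w by (intro continuous_on_atLeast_from_Icc) (simp add: volterra_solution_def)
  moreover have "((\<lambda>s. K t s (G s (w s))) has_integral (w t - K t 0 u0)) {0..t}" if t: "0 \<le> t" for t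
  proof -
    define k where "k = nat \<lceil>t\<rceil>"
    have tk: "t \<in> {0..real k}" using t by (auto simp: k_def le_of_int_ceiling)
    have "continuous_on {0..real k} (\<lambda>s. G s (w s))"
      using w[of k] by (auto simp: volterra_solution_def intro: continuous_on_compose_time_dependent[OF GcT])
    then have "(\<lambda>s. K t s (G s (w s))) integrable_on {0..t}"
      using kernel_apply_integrable_on[OF Kc N(2)[where k=k] _ tk] by blast
    then show ?thesis
      using w[of k] tk by (auto simp: volterra_solution_def a_def)
  qed
  ultimately show ?thesis by blast
qed

section \<open>Averaging\<close>

locale averaging_setting =
  fixes R :: "real \<Rightarrow> real \<Rightarrow> real \<Rightarrow> ('e::banach \<Rightarrow>\<^sub>L 'e)"
    and S :: "real \<Rightarrow> ('e \<Rightarrow>\<^sub>L 'e)"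
    and F :: "real \<Rightarrow> 'e \<Rightarrow> 'e"
    and Fh :: "'e \<Rightarrow> 'e"
    and M \<omega> :: real
  assumes evol: "\<And>l. l > 0 \<Longrightarrow> evolution_system (R l)"
    and A1: "M \<ge> 1" "\<And>l t s. l > 0 \<Longrightarrow> 0 \<le> s \<Longrightarrow> s \<le> t \<Longrightarrow>
               norm (R l t s) \<le> M * exp (\<omega> * (t - s))"
    and A2_semigroup: "C0_semigroup S"
    and A2_limit: "\<And>u T \<epsilon>. \<epsilon> > 0 \<Longrightarrow> \<exists>\<delta>>0. \<forall>l v t s. 0 < l \<and> l < \<delta> \<and> dist v u < \<delta> \<and>
                      0 \<le> s \<and> s \<le> t \<and> t \<le> T \<longrightarrow>
                      dist (blinfun_apply (R l t s) v) (blinfun_apply (S (t - s)) u) < \<epsilon>"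
    and A3_cont: "continuous_on ({0..} \<times> UNIV) (\<lambda>(t, v). F t v)"
    and A3_lip: "\<And>B. bounded B \<Longrightarrow> \<exists>L. \<forall>t\<ge>0. \<forall>x\<in>B. \<forall>y\<in>B. dist (F t x) (F t y) \<le> L * dist x y"
    and A3_growth: "\<exists>c>0. \<forall>t\<ge>0. \<forall>v. norm (F t v) \<le> c * (1 + norm v)"
    and A4_compact: "\<And>u. compact (closure {F t u | t. t \<ge> 0})"
    and A4_avg: "\<And>u \<epsilon>. \<epsilon> > 0 \<Longrightarrow> \<exists>T0 \<delta>. \<delta> > 0 \<and> (\<forall>T v h. T \<ge> T0 \<and> T > 0 \<and> dist v u < \<delta> \<and> h > 0 \<longrightarrow>
                      dist ((1 / T) *\<^sub>R integral {0..T} (\<lambda>\<tau>. F (\<tau> + h) v)) (Fh u) < \<epsilon>)"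
begin

definition cF :: real where "cF = (SOME c. c > 0 \<and> (\<forall>t\<ge>0. \<forall>v. norm (F t v) \<le> c * (1 + norm v)))"

lemma cF: "cF > 0" "\<And>t v. 0 \<le> t \<Longrightarrow> norm (F t v) \<le> cF * (1 + norm v)"
  using someI_ex[OF A3_growth] unfolding cF_def by auto

definition op_bound :: "real \<Rightarrow> real" where "op_bound T = M * exp (\<bar>\<omega>\<bar> * T)"

lemma op_bound_pos: "op_bound T > 0"
  using A1(1) by (simp add: op_bound_def)

text \<open>The bound (A1) passes to the limit semigroup through (A2).\<close>

lemma norm_S_le:
  assumes "0 \<le> \<sigma>"
  shows "norm (S \<sigma>) \<le> M * exp (\<omega> * \<sigma>)"
proof (rule norm_blinfun_bound)
  show "0 \<le> M * exp (\<omega> * \<sigma>)" using A1(1) by simp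
  fix x
  show "norm (S \<sigma> x) \<le> M * exp (\<omega> * \<sigma>) * norm x"
  proof (rule field_le_epsilon)
    fix e :: real assume e: "0 < e"
    obtain \<delta> where \<delta>: "\<delta> > 0" and H: "\<forall>l v t s. 0 < l \<and> l < \<delta> \<and> dist v x < \<delta> \<and> 0 \<le> s \<and> s \<le> t \<and> t \<le> \<sigma> \<longrightarrow>
                      dist (R l t s v) (S (t - s) x) < e"
      using A2_limit[OF e, of x \<sigma>] by blast
    have d: "dist (R (\<delta>/2) \<sigma> 0 x) (S \<sigma> x) < e"
      using H[rule_format, of "\<delta>/2" x 0 \<sigma>] \<delta> assms by simp
    have "norm (R (\<delta>/2) \<sigma> 0 x) \<le> norm (R (\<delta>/2) \<sigma> 0) * norm x" by (rule norm_blinfun)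
    also have "\<dots> \<le> M * exp (\<omega> * \<sigma>) * norm x"
      using A1(2)[of "\<delta>/2" 0 \<sigma>] \<delta> assms by (simp add: mult_right_mono)
    finally have "norm (R (\<delta>/2) \<sigma> 0 x) \<le> M * exp (\<omega> * \<sigma>) * norm x" .
    then show "norm (S \<sigma> x) \<le> M * exp (\<omega> * \<sigma>) * norm x + e"
      using d norm_triangle_ineq3[of "S \<sigma> x" "R (\<delta>/2) \<sigma> 0 x"]
      by (simp add: dist_norm norm_minus_commute)
  qed
qed

lemma exp_le_op_bound:
  assumes "0 \<le> x" "x \<le> T"
  shows "M * exp (\<omega> * x) \<le> op_bound T"
proof -
  have "\<omega> * x \<le> \<bar>\<omega>\<bar> * x" using mult_right_mono[OF abs_ge_self assms(1)] by simp
  also have "\<dots> \<le> \<bar>\<omega>\<bar> * T" using assms by (simp add: mult_left_mono)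
  finally have "exp (\<omega> * x) \<le> exp (\<bar>\<omega>\<bar> * T)" by simp
  then show ?thesis unfolding op_bound_def using A1(1) by simp
qed

lemma norm_S_le_op_bound: "0 \<le> s \<Longrightarrow> s \<le> t \<Longrightarrow> t \<le> T \<Longrightarrow> norm (S (t - s)) \<le> op_bound T"
  using norm_S_le[of "t - s"] exp_le_op_bound[of "t - s" T] by auto

lemma norm_R_le_op_bound: "0 < l \<Longrightarrow> 0 \<le> s \<Longrightarrow> s \<le> t \<Longrightarrow> t \<le> T \<Longrightarrow> norm (R l t s) \<le> op_bound T"
  using A1(2)[of l s t] exp_le_op_bound[of "t - s" T] by auto

lemma S_continuous: "continuous_on {0..} (\<lambda>t. S t u)"
  using A2_semigroup by (simp add: C0_semigroup_def)

lemma S_kernel_continuous: "continuous_on {(s, t). 0 \<le> s \<and> s \<le> t} (\<lambda>(s, t). S (t - s) u)"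
proof -
  have "continuous_on {(s, t). 0 \<le> s \<and> s \<le> t} (\<lambda>p. (\<lambda>t. S t u) (snd p - fst p))"
    by (rule continuous_on_compose2[OF S_continuous]) (auto intro!: continuous_intros)
  then show ?thesis by (simp add: case_prod_beta)
qed

lemma R_kernel_continuous: "0 < l \<Longrightarrow> continuous_on {(s, t). 0 \<le> s \<and> s \<le> t} (\<lambda>(s, t). R l t s u)"
  using evol[of l] by (simp add: evolution_system_def)

lemma F_rescaled_continuous: "0 < l \<Longrightarrow> continuous_on ({0..} \<times> UNIV) (\<lambda>(t, v). F (t / l) v)"
proof -
  assume l: "0 < l"
  have "continuous_on ({0..} \<times> UNIV) (\<lambda>p. (\<lambda>(t, v). F t v) (fst p / l, snd p))"
    by (rule continuous_on_compose2[OF A3_cont]) (use l in \<open>auto intro!: continuous_intros\<close>)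
  then show ?thesis by (simp add: case_prod_beta)
qed

lemma continuous_on_F_compose:
  assumes "continuous_on A g" "continuous_on A h" "\<And>x. x \<in> A \<Longrightarrow> 0 \<le> g x"
  shows "continuous_on A (\<lambda>x. F (g x) (h x))"
  by (rule continuous_on_compose_time_dependent[OF A3_cont]) (use assms in auto)

definition time_avg :: "real \<Rightarrow> real \<Rightarrow> 'e \<Rightarrow> 'e" where "time_avg T h v = (1 / T) *\<^sub>R integral {0..T} (\<lambda>\<tau>. F (\<tau> + h) v)"

lemma F_shift_integrable: "0 \<le> h \<Longrightarrow> (\<lambda>\<tau>. F (\<tau> + h) v) integrable_on {0..T}"
proof -
  assume h: "0 \<le> h"
  have "continuous_on {0..T} (\<lambda>\<tau>. F (\<tau> + h) v)"
    using continuous_on_F_compose[of "{0..T}" "\<lambda>\<tau>. \<tau> + h" "\<lambda>\<tau>. v"] h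
    by (simp add: continuous_on_add continuous_on_const continuous_on_id)
  then show ?thesis by (rule integrable_continuous_real)
qed

lemma norm_time_avg_le: "0 < T \<Longrightarrow> 0 \<le> h \<Longrightarrow> norm (time_avg T h v) \<le> cF * (1 + norm v)"
proof -
  assume T: "0 < T" "0 \<le> h"
  have "norm (integral {0..T} (\<lambda>\<tau>. F (\<tau> + h) v)) \<le> cF * (1 + norm v) * (T - 0)"
    by (rule norm_integral_le_const[OF F_shift_integrable]) (use T cF(2) in auto)
  then show ?thesis using T by (simp add: time_avg_def field_simps)
qed

lemma dist_time_avg_le:
  assumes T: "0 < T" "0 \<le> h" and L: "\<forall>t\<ge>0. \<forall>x\<in>B. \<forall>y\<in>B. dist (F t x) (F t y) \<le> L * dist x y"
    and xy: "x \<in> B" "y \<in> B"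
  shows "dist (time_avg T h x) (time_avg T h y) \<le> L * dist x y"
proof -
  have "norm (integral {0..T} (\<lambda>\<tau>. F (\<tau> + h) x) - integral {0..T} (\<lambda>\<tau>. F (\<tau> + h) y)) =
      norm (integral {0..T} (\<lambda>\<tau>. F (\<tau> + h) x - F (\<tau> + h) y))"
    by (simp add: integral_diff[OF F_shift_integrable F_shift_integrable] T)
  also have "\<dots> \<le> L * dist x y * (T - 0)"
    by (rule norm_integral_le_const) (use T L xy in \<open>auto intro!: integrable_diff F_shift_integrable simp: dist_norm\<close>)
  finally have I: "norm (integral {0..T} (\<lambda>\<tau>. F (\<tau> + h) x) - integral {0..T} (\<lambda>\<tau>. F (\<tau> + h) y)) \<le> L * dist x y * T"
    by simp
  have "dist (time_avg T h x) (time_avg T h y) = (1 / T) * norm (integral {0..T} (\<lambda>\<tau>. F (\<tau> + h) x) - integral {0..T} (\<lambda>\<tau>. F (\<tau> + h) y))"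
    unfolding time_avg_def dist_norm using T by (simp flip: scaleR_diff_right)
  also have "\<dots> \<le> (1 / T) * (L * dist x y * T)"
    by (rule mult_left_mono[OF I]) (use T in simp)
  also have "\<dots> = L * dist x y" using T by simp
  finally show ?thesis .
qed

lemma time_avg_tendsto_Fh:
  assumes e: "e > 0"
  shows "\<exists>T0. \<forall>T. T \<ge> T0 \<longrightarrow> T > 0 \<longrightarrow> dist (time_avg T 1 u) (Fh u) < e"
proof -
  obtain T0 \<delta> where "\<delta> > 0" "\<forall>T v h. T \<ge> T0 \<and> T > 0 \<and> dist v u < \<delta> \<and> h > 0 \<longrightarrow>
                      dist ((1 / T) *\<^sub>R integral {0..T} (\<lambda>\<tau>. F (\<tau> + h) v)) (Fh u) < e"
    using A4_avg[OF e, of u] by blast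
  then have "\<forall>T. T \<ge> T0 \<longrightarrow> T > 0 \<longrightarrow> dist (time_avg T 1 u) (Fh u) < e"
    unfolding time_avg_def by (metis dist_self zero_less_one)
  then show ?thesis by blast
qed

lemma norm_Fh_le: "norm (Fh v) \<le> cF * (1 + norm v)"
proof (rule field_le_epsilon)
  fix e :: real assume e: "0 < e"
  obtain T0 where T0: "\<And>T. T \<ge> T0 \<Longrightarrow> T > 0 \<Longrightarrow> dist (time_avg T 1 v) (Fh v) < e"
    using time_avg_tendsto_Fh[OF e] by blast
  define T where "T = max T0 1"
  have "dist (time_avg T 1 v) (Fh v) < e" using T0[of T] by (simp add: T_def)
  moreover have "norm (time_avg T 1 v) \<le> cF * (1 + norm v)" by (rule norm_time_avg_le) (auto simp: T_def)
  ultimately show "norm (Fh v) \<le> cF * (1 + norm v) + e"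
    using norm_triangle_ineq3[of "Fh v" "time_avg T 1 v"] by (simp add: dist_norm norm_minus_commute)
qed

lemma dist_Fh_le:
  assumes L: "\<forall>t\<ge>0. \<forall>x\<in>B. \<forall>y\<in>B. dist (F t x) (F t y) \<le> L * dist x y" and xy: "x \<in> B" "y \<in> B"
  shows "dist (Fh x) (Fh y) \<le> L * dist x y"
proof (rule field_le_epsilon)
  fix e :: real assume e: "0 < e"
  obtain T1 where T1: "\<And>T. T \<ge> T1 \<Longrightarrow> T > 0 \<Longrightarrow> dist (time_avg T 1 x) (Fh x) < e/2"
    using time_avg_tendsto_Fh[of "e/2" x] e by (metis half_gt_zero)
  obtain T2 where T2: "\<And>T. T \<ge> T2 \<Longrightarrow> T > 0 \<Longrightarrow> dist (time_avg T 1 y) (Fh y) < e/2"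
    using time_avg_tendsto_Fh[of "e/2" y] e by (metis half_gt_zero)
  define T where "T = max (max T1 T2) 1"
  have 1: "dist (time_avg T 1 x) (Fh x) < e/2" using T1[of T] by (simp add: T_def)
  have 2: "dist (time_avg T 1 y) (Fh y) < e/2" using T2[of T] by (simp add: T_def)
  have 3: "dist (time_avg T 1 x) (time_avg T 1 y) \<le> L * dist x y" by (rule dist_time_avg_le[OF _ _ L xy]) (auto simp: T_def)
  show "dist (Fh x) (Fh y) \<le> L * dist x y + e"
    using 1 2 3 dist_triangle[of "Fh x" "Fh y" "time_avg T 1 x"] dist_triangle[of "time_avg T 1 x" "Fh y" "time_avg T 1 y"]
    by (simp add: dist_commute)
qed

lemma Fh_lipschitz_on_bounded: "bounded B \<Longrightarrow> \<exists>L. \<forall>x\<in>B. \<forall>y\<in>B. dist (Fh x) (Fh y) \<le> L * dist x y"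
proof -
  assume "bounded B"
  then obtain L where "\<forall>t\<ge>0. \<forall>x\<in>B. \<forall>y\<in>B. dist (F t x) (F t y) \<le> L * dist x y"
    using A3_lip by blast
  then show ?thesis using dist_Fh_le by blast
qed

lemma continuous_Fh: "continuous_on UNIV Fh"
  unfolding continuous_on_iff
proof (intro ballI allI impI)
  fix x and e :: real assume e: "e > 0"
  obtain L where L: "\<forall>a\<in>cball x 1. \<forall>b\<in>cball x 1. dist (Fh a) (Fh b) \<le> L * dist a b"
    using Fh_lipschitz_on_bounded[of "cball x 1"] by auto
  define d where "d = min 1 (e / (\<bar>L\<bar> + 1))"
  show "\<exists>d>0. \<forall>x'\<in>UNIV. dist x' x < d \<longrightarrow> dist (Fh x') (Fh x) < e"
  proof (intro exI[of _ d] conjI ballI impI)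
    show "d > 0" using e by (simp add: d_def)
    fix y assume y: "dist y x < d"
    have "dist (Fh y) (Fh x) \<le> L * dist y x" using L y by (auto simp: d_def dist_commute)
    also have "\<dots> \<le> \<bar>L\<bar> * dist y x" by (simp add: mult_right_mono)
    also have "\<dots> \<le> \<bar>L\<bar> * d" using y by (simp add: mult_left_mono)
    also have "\<dots> < e"
    proof -
      have "\<bar>L\<bar> * d \<le> \<bar>L\<bar> * (e / (\<bar>L\<bar> + 1))" unfolding d_def by (rule mult_left_mono) auto
      also have "\<dots> < e" using e by (simp add: field_simps)
      finally show ?thesis .
    qed
    finally show "dist (Fh y) (Fh x) < e" .
  qed
qed

lemma R_approx_S_uniform_on_compact:
  assumes C: "compact C" and e: "e > 0"
  shows "\<exists>\<delta>>0. \<forall>l y s t. 0 < l \<and> l < \<delta> \<and> y \<in> C \<and> 0 \<le> s \<and> s \<le> t \<and> t \<le> T \<longrightarrow>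
      dist (R l t s y) (S (t - s) y) < e"
proof -
  have "\<forall>u\<in>C. \<exists>d>0. \<forall>l v t s. 0 < l \<and> l < d \<and> dist v u < d \<and> 0 \<le> s \<and> s \<le> t \<and> t \<le> T \<longrightarrow>
                      dist (R l t s v) (S (t - s) u) < e/2"
    using A2_limit e by (metis half_gt_zero)
  then obtain d where d: "\<And>u. u \<in> C \<Longrightarrow> d u > 0"
    and dH: "\<And>u l v t s. u \<in> C \<Longrightarrow> 0 < l \<Longrightarrow> l < d u \<Longrightarrow> dist v u < d u \<Longrightarrow> 0 \<le> s \<Longrightarrow> s \<le> t \<Longrightarrow> t \<le> T \<Longrightarrow>
                      dist (R l t s v) (S (t - s) u) < e/2"
    by metis
  define \<rho> where "\<rho> u = min (d u) (e / (2 * op_bound T))" for u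
  have \<rho>: "\<rho> u > 0" if "u \<in> C" for u using d[OF that] e op_bound_pos by (simp add: \<rho>_def)
  obtain C' where C': "C' \<subseteq> C" "finite C'" "C \<subseteq> (\<Union>u\<in>C'. ball u (\<rho> u))"
    by (rule compactE_image[OF C, of C "\<lambda>u. ball u (\<rho> u)"]) (use \<rho> in auto)
  define \<delta> where "\<delta> = (if C' = {} then 1 else Min (\<rho> ` C'))"
  have \<delta>0: "\<delta> > 0" using C' \<rho> by (auto simp: \<delta>_def)
  have \<delta>le: "\<delta> \<le> \<rho> u" if "u \<in> C'" for u using C' that by (auto simp: \<delta>_def)
  show ?thesis
  proof (intro exI[of _ \<delta>] conjI \<delta>0 allI impI)
    fix l y s t assume H: "0 < l \<and> l < \<delta> \<and> y \<in> C \<and> 0 \<le> s \<and> s \<le> t \<and> t \<le> T"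
    then obtain u where u: "u \<in> C'" "dist u y < \<rho> u" using C' by auto
    have uC: "u \<in> C" using u C' by auto
    have 1: "dist (R l t s y) (S (t - s) u) < e/2"
      by (rule dH[OF uC]) (use H u \<delta>le[OF u(1)] in \<open>auto simp: \<rho>_def dist_commute\<close>)
    have "dist (S (t - s) u) (S (t - s) y) = norm (S (t - s) (u - y))"
      by (simp add: dist_norm blinfun.diff_right)
    also have "\<dots> \<le> norm (S (t - s)) * norm (u - y)" by (rule norm_blinfun)
    also have "\<dots> \<le> op_bound T * norm (u - y)" using norm_S_le_op_bound[of s t T] H by (simp add: mult_right_mono)
    also have "\<dots> < op_bound T * (e / (2 * op_bound T))"
      using u(2) op_bound_pos[of T] by (intro mult_strict_left_mono) (auto simp: \<rho>_def dist_norm)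
    also have "\<dots> = e / 2" using op_bound_pos[of T] by simp
    finally have 2: "dist (S (t - s) u) (S (t - s) y) < e/2" .
    show "dist (R l t s y) (S (t - s) y) < e"
      using 1 2 dist_triangle[of "R l t s y" "S (t - s) y" "S (t - s) u"]
      by linarith
  qed
qed

lemma compact_closure_F_values:
  assumes U: "compact U"
  shows "compact (closure {F s w | s w. 0 \<le> s \<and> w \<in> U})"
proof -
  define X where "X = {F s w | s w. 0 \<le> s \<and> w \<in> U}"
  obtain L where L: "\<forall>t\<ge>0. \<forall>x\<in>U. \<forall>y\<in>U. dist (F t x) (F t y) \<le> L * dist x y"
    using A3_lip[OF compact_imp_bounded[OF U]] by blast
  define L' where "L' = \<bar>L\<bar> + 1"
  have L'0: "L' > 0" by (simp add: L'_def)
  have cover: "\<exists>k. finite k \<and> closure X \<subseteq> (\<Union>x\<in>k. ball x e)" if e: "e > 0" for e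
  proof -
    define r where "r = e / (4 * L')"
    have r: "r > 0" using e L'0 by (simp add: r_def)
    obtain C' where C': "C' \<subseteq> U" "finite C'" "U \<subseteq> (\<Union>u\<in>C'. ball u r)"
      by (rule compactE_image[OF U, of U "\<lambda>u. ball u r"]) (use r in auto)
    have e4: "e/4 > 0" using e by simp
    have "\<exists>k. finite k \<and> closure {F t w | t. t \<ge> 0} \<subseteq> (\<Union>x\<in>k. ball x (e/4))" for w
    proof -
      have "complete (closure {F t w | t. t \<ge> 0}) \<and> (\<forall>\<epsilon>>0. \<exists>k. finite k \<and> closure {F t w | t. t \<ge> 0} \<subseteq> (\<Union>x\<in>k. ball x \<epsilon>))"
        using A4_compact[of w] unfolding compact_eq_totally_bounded .
      then show ?thesis using e4 by blast
    qed
    then have "\<forall>w\<in>C'. \<exists>k. finite k \<and> closure {F t w | t. t \<ge> 0} \<subseteq> (\<Union>x\<in>k. ball x (e/4))" by blast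
    from bchoice[OF this] obtain kw where kw0: "\<forall>w\<in>C'. finite (kw w) \<and> closure {F t w | t. t \<ge> 0} \<subseteq> (\<Union>x\<in>kw w. ball x (e/4))"
      by (elim exE)
    then have kw: "\<And>w. w \<in> C' \<Longrightarrow> finite (kw w) \<and> closure {F t w | t. t \<ge> 0} \<subseteq> (\<Union>x\<in>kw w. ball x (e/4))"
      by blast
    define k where "k = (\<Union>w\<in>C'. kw w)"
    have kf: "finite k" unfolding k_def by (rule finite_UN_I[OF C'(2)]) (use kw in blast)
    have Xk: "X \<subseteq> (\<Union>x\<in>k. cball x (e/2))"
    proof
      fix z assume "z \<in> X"
      then obtain s v where z: "z = F s v" "0 \<le> s" "v \<in> U" by (auto simp: X_def)
      then obtain w where w: "w \<in> C'" "dist w v < r" using C' by auto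
      have wU: "w \<in> U" using w C' by auto
      have "F s w \<in> {F t w | t. t \<ge> 0}" using z by blast
      then have "F s w \<in> closure {F t w | t. t \<ge> 0}" by (rule closure_subset[THEN subsetD])
      then obtain p where p: "p \<in> kw w" "dist p (F s w) < e/4" using kw[OF w(1)] by auto
      have "dist (F s v) (F s w) \<le> L * dist v w" using L z wU by blast
      also have "\<dots> \<le> L' * dist v w" by (simp add: L'_def mult_right_mono)
      also have "\<dots> \<le> L' * r" using w L'0 by (simp add: dist_commute)
      also have "\<dots> = e / 4" using L'0 by (simp add: r_def)
      finally have "dist (F s v) (F s w) \<le> e / 4" .
      then have "dist p z \<le> e / 2"
        using p z dist_triangle[of p "F s v" "F s w"] by (simp add: dist_commute)
      moreover have "p \<in> k" using p w by (auto simp: k_def)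
      ultimately show "z \<in> (\<Union>x\<in>k. cball x (e/2))" by auto
    qed
    have "closed (\<Union>x\<in>k. cball x (e/2))" by (rule closed_UN) (use kf in auto)
    then have "closure X \<subseteq> (\<Union>x\<in>k. cball x (e/2))"
      by (rule closure_minimal[OF Xk])
    also have "\<dots> \<subseteq> (\<Union>x\<in>k. ball x e)"
    proof (rule UN_mono)
      fix x show "cball x (e/2) \<subseteq> ball x e" using e by (simp add: subset_iff)
    qed simp
    finally show ?thesis using kf by blast
  qed
  have "complete (closure X)" by (simp add: complete_eq_closed)
  then have "compact (closure X)" unfolding compact_eq_totally_bounded using cover by blast
  then show ?thesis by (simp add: X_def)
qed

lemma time_avg_approx_Fh_uniform_on_compact:
  assumes U: "compact U" and e: "e > 0"
  shows "\<exists>T0>0. \<forall>T (h::real) w. T \<ge> T0 \<and> h > 0 \<and> w \<in> U \<longrightarrow> dist (time_avg T h w) (Fh w) < e"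
proof -
  have "\<forall>u\<in>U. \<exists>T0 d. d > 0 \<and> (\<forall>T v (h::real). T \<ge> T0 \<and> T > 0 \<and> dist v u < d \<and> h > 0 \<longrightarrow> dist (time_avg T h v) (Fh u) < e/2)"
    using A4_avg e unfolding time_avg_def by (metis half_gt_zero)
  then obtain T0 d where d: "\<And>u. u \<in> U \<Longrightarrow> d u > 0"
    and dH: "\<And>u T v h. u \<in> U \<Longrightarrow> T \<ge> T0 u \<Longrightarrow> T > 0 \<Longrightarrow> dist v u < d u \<Longrightarrow> h > 0 \<Longrightarrow> dist (time_avg T h v) (Fh u) < e/2"
    by metis
  have "\<forall>u. \<exists>dc>0. \<forall>v. dist v u < dc \<longrightarrow> dist (Fh v) (Fh u) < e/2"
    using continuous_Fh e unfolding continuous_on_iff by (metis UNIV_I half_gt_zero)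
  then obtain dc where dc: "\<And>u. dc u > 0" and dcH: "\<And>u v. dist v u < dc u \<Longrightarrow> dist (Fh v) (Fh u) < e/2"
    by metis
  define \<rho> where "\<rho> u = min (d u) (dc u)" for u
  have \<rho>: "\<rho> u > 0" if "u \<in> U" for u using d[OF that] dc[of u] by (simp add: \<rho>_def)
  obtain C' where C': "C' \<subseteq> U" "finite C'" "U \<subseteq> (\<Union>u\<in>C'. ball u (\<rho> u))"
    by (rule compactE_image[OF U, of U "\<lambda>u. ball u (\<rho> u)"]) (use \<rho> in auto)
  define T1 where "T1 = max 1 (if C' = {} then 1 else Max (T0 ` C'))"
  have T1: "T1 > 0" by (simp add: T1_def)
  have T1le: "T0 u \<le> T1" if "u \<in> C'" for u
    using C' that by (auto simp: T1_def intro!: max.coboundedI2)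
  show ?thesis
  proof (intro exI[of _ T1] conjI T1 allI impI)
    fix T h :: real and w assume H: "T1 \<le> T \<and> 0 < h \<and> w \<in> U"
    then obtain u where u: "u \<in> C'" "dist u w < \<rho> u" using C' by auto
    have uU: "u \<in> U" using u C' by auto
    have 1: "dist (time_avg T h w) (Fh u) < e/2"
      by (rule dH[OF uU]) (use H u T1le[OF u(1)] T1 in \<open>auto simp: \<rho>_def dist_commute\<close>)
    have 2: "dist (Fh w) (Fh u) < e/2"
      by (rule dcH) (use u in \<open>auto simp: \<rho>_def dist_commute\<close>)
    show "dist (time_avg T h w) (Fh w) < e"
      using 1 2 dist_triangle[of "time_avg T h w" "Fh w" "Fh u"] by (simp add: dist_commute)
  qed
qed

lemma integral_F_rescaled_eq_time_avg:
  assumes l: "0 < l" and a: "0 \<le> a" and H: "0 < H"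
  shows "integral {a..a+H} (\<lambda>\<tau>. F (\<tau> / l) w) = H *\<^sub>R time_avg (H / l) (a / l) w"
proof -
  define J where "J = integral {0..H/l} (\<lambda>s. F (s + a / l) w)"
  have g: "((\<lambda>s. F (s + a / l) w) has_integral J) {0..H/l}"
    unfolding J_def by (rule integrable_integral[OF F_shift_integrable]) (use l a in simp)
  have "((\<lambda>x. F (x + (- (a / l)) + a / l) w) has_integral J) {0 - (- (a / l)) .. H/l - (- (a / l))}"
    by (rule has_integral_shift_real_ivl[OF g])
  then have sh: "((\<lambda>x. F x w) has_integral J) {a / l .. H / l + a / l}" by simp
  have "((\<lambda>x. F ((1 / l) * x) w) has_integral (1 / \<bar>1 / l\<bar>) *\<^sub>R J) ((\<lambda>x. x / (1 / l)) ` {a / l .. H / l + a / l})"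
    by (rule has_integral_stretch_real[OF sh]) (use l in simp)
  moreover have "(\<lambda>x. x / (1 / l)) ` {a / l .. H / l + a / l} = {a..a+H}"
  proof -
    have ee: "(\<lambda>x. x / (1 / l)) = (*) l" by (rule ext) simp
    have "(\<lambda>x. x / (1 / l)) ` {a / l .. H / l + a / l} = (*) l ` {a / l .. H / l + a / l}" by (simp only: ee)
    also have "\<dots> = {l * (a / l) .. l * (H / l + a / l)}" using l by simp
    also have "\<dots> = {a..a+H}" using l by (simp add: field_simps)
    finally show ?thesis .
  qed
  ultimately have "((\<lambda>\<tau>. F (\<tau> / l) w) has_integral l *\<^sub>R J) {a..a+H}"
    using l by (simp add: divide_inverse mult.commute)
  then have "integral {a..a+H} (\<lambda>\<tau>. F (\<tau> / l) w) = l *\<^sub>R J" by (rule integral_unique)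
  also have "\<dots> = H *\<^sub>R time_avg (H / l) (a / l) w"
    using l H by (simp add: time_avg_def J_def)
  finally show ?thesis .
qed

lemma continuous_on_S_apply:
  assumes y: "continuous_on {0..t} y"
  shows "continuous_on {0..t} (\<lambda>\<tau>. S (t - \<tau>) (y \<tau>))"
proof (rule continuous_on_blinfun_apply_bounded[OF _ _ y])
  fix u
  show "continuous_on {0..t} (\<lambda>\<tau>. S (t - \<tau>) u)"
    by (rule continuous_on_compose2[OF S_continuous]) (auto intro!: continuous_intros)
  show "\<And>\<tau>. \<tau> \<in> {0..t} \<Longrightarrow> norm (S (t - \<tau>)) \<le> op_bound t"
    by (rule norm_S_le_op_bound) auto
qed

lemma continuous_on_R_apply:
  assumes l: "0 < l" and y: "continuous_on {0..t} y"
  shows "continuous_on {0..t} (\<lambda>\<tau>. R l t \<tau> (y \<tau>))"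
proof (rule continuous_on_blinfun_apply_bounded[OF _ _ y])
  fix u
  have "continuous_on {0..t} (\<lambda>\<tau>. (\<lambda>(s,t). R l t s u) (\<tau>, t))"
    by (rule continuous_on_compose2[OF R_kernel_continuous[OF l]]) (auto intro!: continuous_intros)
  then show "continuous_on {0..t} (\<lambda>\<tau>. R l t \<tau> u)" by simp
  show "\<And>\<tau>. \<tau> \<in> {0..t} \<Longrightarrow> norm (R l t \<tau>) \<le> op_bound t"
    by (rule norm_R_le_op_bound[OF l]) auto
qed

lemma F_Fh_lipschitz_on_bounded:
  assumes "bounded B"
  obtains L where "0 \<le> L" "\<And>s x y. 0 \<le> s \<Longrightarrow> x \<in> B \<Longrightarrow> y \<in> B \<Longrightarrow> norm (F s x - F s y) \<le> L * norm (x - y)"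
    "\<And>x y. x \<in> B \<Longrightarrow> y \<in> B \<Longrightarrow> norm (Fh x - Fh y) \<le> L * norm (x - y)"
proof -
  obtain L where L: "\<forall>t\<ge>0. \<forall>x\<in>B. \<forall>y\<in>B. dist (F t x) (F t y) \<le> L * dist x y"
    using A3_lip[OF assms] by blast
  have le: "L * dist x y \<le> max L 0 * dist x y" for x y :: 'e
    by (simp add: mult_right_mono)
  show ?thesis
  proof (rule that[of "max L 0"])
    show "norm (F s x - F s y) \<le> max L 0 * norm (x - y)" if "0 \<le> s" "x \<in> B" "y \<in> B" for s x y
      using L that le[of x y] by (fastforce simp: dist_norm)
    show "norm (Fh x - Fh y) \<le> max L 0 * norm (x - y)" if "x \<in> B" "y \<in> B" for x y
      using dist_Fh_le[OF L that] le[of x y] by (simp add: dist_norm)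
  qed simp
qed

lemma compact_F_minus_Fh_values:
  assumes U: "compact U"
  obtains C where "compact C" "\<And>s w. 0 \<le> s \<Longrightarrow> w \<in> U \<Longrightarrow> F s w - Fh w \<in> C"
proof -
  define W where "W = closure {F s w | s w. 0 \<le> s \<and> w \<in> U}"
  have "compact (Fh ` U)"
    by (rule compact_continuous_image[OF continuous_on_subset[OF continuous_Fh] U]) simp
  then have "compact {x - y | x y. x \<in> W \<and> y \<in> Fh ` U}"
    unfolding W_def by (rule compact_differences[OF compact_closure_F_values[OF U]])
  moreover have "F s w - Fh w \<in> {x - y | x y. x \<in> W \<and> y \<in> Fh ` U}" if "0 \<le> s" "w \<in> U" for s w
  proof -
    have "F s w \<in> W" unfolding W_def using that by (intro closure_subset[THEN subsetD]) blast
    then show ?thesis using that by blast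
  qed
  ultimately show ?thesis by (rule that)
qed

lemma S_uniformly_equicontinuous_on_compact:
  assumes C: "compact C" and e: "0 < e"
  obtains \<delta> where "0 < \<delta>" "\<And>\<sigma> \<sigma>' y. \<sigma> \<in> {0..T} \<Longrightarrow> \<sigma>' \<in> {0..T} \<Longrightarrow> y \<in> C \<Longrightarrow> \<bar>\<sigma> - \<sigma>'\<bar> < \<delta> \<Longrightarrow>
      dist (S \<sigma> y) (S \<sigma>' y) < e"
proof -
  have "continuous_on ({0..T} \<times> C) (\<lambda>p. S (fst p) (snd p))"
  proof (rule continuous_on_blinfun_apply_bounded)
    show "continuous_on ({0..T} \<times> C) (\<lambda>p. S (fst p) y)" for y
      by (rule continuous_on_compose2[OF S_continuous]) (auto intro!: continuous_intros)
    show "norm (S (fst p)) \<le> op_bound T" if "p \<in> {0..T} \<times> C" for p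
      using norm_S_le_op_bound[of 0 "fst p" T] that by auto
  qed (intro continuous_intros)
  then have "uniformly_continuous_on ({0..T} \<times> C) (\<lambda>p. S (fst p) (snd p))"
    by (rule compact_uniformly_continuous[OF _ compact_Times[OF compact_Icc C]])
  then obtain \<delta> where "0 < \<delta>" and \<delta>: "\<And>p p'. p \<in> {0..T} \<times> C \<Longrightarrow> p' \<in> {0..T} \<times> C \<Longrightarrow>
      dist p' p < \<delta> \<Longrightarrow> dist (S (fst p') (snd p')) (S (fst p) (snd p)) < e"
    using e unfolding uniformly_continuous_on_def by metis
  show ?thesis
  proof (rule that[OF \<open>0 < \<delta>\<close>])
    fix \<sigma> \<sigma>' y assume "\<sigma> \<in> {0..T}" "\<sigma>' \<in> {0..T}" "y \<in> C" "\<bar>\<sigma> - \<sigma>'\<bar> < \<delta>"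
    then show "dist (S \<sigma> y) (S \<sigma>' y) < e"
      using \<delta>[of "(\<sigma>', y)" "(\<sigma>, y)"] by (simp add: dist_Pair_Pair dist_real_def)
  qed
qed

lemma integral_F_rescaled_minus_Fh:
  assumes l: "0 < l" and a: "0 \<le> a" and h: "0 < h"
  shows "integral {a..a+h} (\<lambda>\<tau>. F (\<tau> / l) w - Fh w) = h *\<^sub>R (time_avg (h / l) (a / l) w - Fh w)"
proof -
  have "(\<lambda>\<tau>. F (\<tau> / l) w) integrable_on {a..a+h}"
    by (intro integrable_continuous_real continuous_on_F_compose) (use l a in \<open>auto intro!: continuous_intros\<close>)
  then show ?thesis
    using integral_diff[OF _ integrable_const_ivl[of "Fh w" a "a+h"]] integral_F_rescaled_eq_time_avg[OF l a h] h
    by (simp add: scaleR_diff_right)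
qed

lemma continuous_on_averaging_integrand:
  assumes l: "0 < l" and u: "continuous_on {0..} u"
  shows "continuous_on {0..t} (\<lambda>\<tau>. S (t - \<tau>) (F (\<tau> / l) (u \<tau>) - Fh (u \<tau>)))"
proof (intro continuous_on_S_apply continuous_intros)
  have ut: "continuous_on {0..t} u" by (rule continuous_on_subset[OF u]) auto
  show "continuous_on {0..t} (\<lambda>\<tau>. F (\<tau> / l) (u \<tau>))"
    by (rule continuous_on_F_compose) (use l ut in \<open>auto intro!: continuous_intros\<close>)
  show "continuous_on {0..t} (\<lambda>\<tau>. Fh (u \<tau>))"
    by (rule continuous_on_compose2[OF continuous_Fh ut]) auto
qed

text \<open>On a short interval \<open>[a, a + h]\<close> the semigroup and the slow variable are frozen at
  \<open>a\<close>; what remains is \<open>h\<close> times a time average of \<open>F\<close> over the long interval \<open>h/l\<close>.\<close>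

lemma averaging_piece_estimate:
  assumes l: "0 < l" and h: "0 < h" and a: "0 < a" and ah: "a + h \<le> t" and tT: "t \<le> T"
    and uc: "continuous_on {0..} u"
    and SU: "\<And>\<sigma> \<sigma>' y. \<sigma> \<in> {0..T} \<Longrightarrow> \<sigma>' \<in> {0..T} \<Longrightarrow> y \<in> C \<Longrightarrow> \<bar>\<sigma> - \<sigma>'\<bar> \<le> h \<Longrightarrow>
      dist (S \<sigma> y) (S \<sigma>' y) \<le> e1"
    and UU: "\<And>\<tau> \<tau>'. \<tau> \<in> {0..T} \<Longrightarrow> \<tau>' \<in> {0..T} \<Longrightarrow> \<bar>\<tau> - \<tau>'\<bar> \<le> h \<Longrightarrow> norm (u \<tau> - u \<tau>') \<le> e2"
    and yC: "\<And>\<tau>. \<tau> \<in> {0..T} \<Longrightarrow> F (\<tau> / l) (u \<tau>) - Fh (u \<tau>) \<in> C"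
    and LF: "\<And>s \<tau> \<tau>'. 0 \<le> s \<Longrightarrow> \<tau> \<in> {0..T} \<Longrightarrow> \<tau>' \<in> {0..T} \<Longrightarrow>
      norm (F s (u \<tau>) - F s (u \<tau>')) \<le> Lp * norm (u \<tau> - u \<tau>')"
    and LFh: "\<And>\<tau> \<tau>'. \<tau> \<in> {0..T} \<Longrightarrow> \<tau>' \<in> {0..T} \<Longrightarrow>
      norm (Fh (u \<tau>) - Fh (u \<tau>')) \<le> Lp * norm (u \<tau> - u \<tau>')"
    and Lp: "0 \<le> Lp"
    and avg: "norm (time_avg (h / l) (a / l) (u a) - Fh (u a)) \<le> e3"
  shows "norm (integral {a..a+h} (\<lambda>\<tau>. S (t - \<tau>) (F (\<tau> / l) (u \<tau>) - Fh (u \<tau>))))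
    \<le> h * (e1 + op_bound T * (2 * Lp * e2) + op_bound T * e3)"
proof -
  define f where "f \<tau> = S (t - \<tau>) (F (\<tau> / l) (u \<tau>) - Fh (u \<tau>))" for \<tau>
  define g where "g \<tau> = S (t - a) (F (\<tau> / l) (u a) - Fh (u a))" for \<tau>
  have aT: "a \<in> {0..T}" and S_le: "norm (S (t - a)) \<le> op_bound T"
    using a ah tT h norm_S_le_op_bound[of a t T] by auto
  have "f integrable_on {0..t}"
    unfolding f_def by (rule integrable_continuous_real[OF continuous_on_averaging_integrand[OF l uc]])
  then have fi: "f integrable_on {a..a+h}"
    by (rule integrable_on_subinterval) (use a ah in auto)
  have "continuous_on {a..a+h} (\<lambda>\<tau>. F (\<tau> / l) (u a))"
    by (rule continuous_on_F_compose) (use l a in \<open>auto intro!: continuous_intros\<close>)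
  then have F_int: "(\<lambda>\<tau>. F (\<tau> / l) (u a) - Fh (u a)) integrable_on {a..a+h}"
    by (intro integrable_diff integrable_continuous_real integrable_const_ivl)
  have gi: "g integrable_on {a..a+h}"
    using integrable_linear[OF F_int blinfun.bounded_linear_right, of "S (t - a)"]
    by (simp add: g_def[abs_def] o_def)
  have "integral {a..a+h} g = S (t - a) (integral {a..a+h} (\<lambda>\<tau>. F (\<tau> / l) (u a) - Fh (u a)))"
    unfolding g_def by (rule integral_blinfun_apply[OF F_int])
  also have "\<dots> = h *\<^sub>R S (t - a) (time_avg (h / l) (a / l) (u a) - Fh (u a))"
    using integral_F_rescaled_minus_Fh[OF l _ h, of a] a by (simp add: blinfun.scaleR_right)
  finally have "norm (integral {a..a+h} g) = h * norm (S (t - a) (time_avg (h / l) (a / l) (u a) - Fh (u a)))"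
    using h by simp
  also have "\<dots> \<le> h * (norm (S (t - a)) * norm (time_avg (h / l) (a / l) (u a) - Fh (u a)))"
    using h by (intro mult_left_mono norm_blinfun) auto
  also have "\<dots> \<le> h * (op_bound T * e3)"
    using h avg S_le op_bound_pos[of T] by (intro mult_left_mono mult_mono) auto
  finally have I_g: "norm (integral {a..a+h} g) \<le> h * (op_bound T * e3)" .
  have freeze: "norm (f \<tau> - g \<tau>) \<le> e1 + op_bound T * (2 * Lp * e2)" if \<tau>: "\<tau> \<in> {a..a+h}" for \<tau>
  proof -
    have \<tau>T: "\<tau> \<in> {0..T}" using \<tau> a ah tT by auto
    define y where "y = F (\<tau> / l) (u \<tau>) - Fh (u \<tau>)"
    define y' where "y' = F (\<tau> / l) (u a) - Fh (u a)"
    have "norm (S (t - \<tau>) y - S (t - a) y) \<le> e1"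
      using SU[of "t - \<tau>" "t - a" y] yC[OF \<tau>T] \<tau> tT ah h a by (auto simp: dist_norm y_def)
    moreover have "norm (y - y') \<le> 2 * Lp * e2"
    proof -
      have "y - y' = (F (\<tau> / l) (u \<tau>) - F (\<tau> / l) (u a)) - (Fh (u \<tau>) - Fh (u a))"
        by (simp add: y_def y'_def algebra_simps)
      then have "norm (y - y') \<le> norm (F (\<tau> / l) (u \<tau>) - F (\<tau> / l) (u a)) + norm (Fh (u \<tau>) - Fh (u a))"
        by (simp only: norm_triangle_ineq4)
      also have "\<dots> \<le> Lp * norm (u \<tau> - u a) + Lp * norm (u \<tau> - u a)"
        using LF[of "\<tau> / l" \<tau> a] LFh[of \<tau> a] \<tau>T aT l \<tau> a by (auto intro!: add_mono)
      also have "\<dots> \<le> Lp * e2 + Lp * e2"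
        using UU[of \<tau> a] \<tau>T aT \<tau> Lp by (auto intro!: add_mono mult_left_mono)
      finally show ?thesis by simp
    qed
    then have "norm (S (t - a) (y - y')) \<le> op_bound T * (2 * Lp * e2)"
      using S_le op_bound_pos[of T] by (intro order_trans[OF norm_blinfun] mult_mono) auto
    moreover have "f \<tau> - g \<tau> = (S (t - \<tau>) y - S (t - a) y) + S (t - a) (y - y')"
      by (simp add: f_def g_def y_def y'_def blinfun.diff_right)
    ultimately show ?thesis
      by (metis add_mono norm_triangle_le)
  qed
  have "norm (integral {a..a+h} (\<lambda>\<tau>. f \<tau> - g \<tau>)) \<le> (e1 + op_bound T * (2 * Lp * e2)) * (a + h - a)"
    by (rule norm_integral_le_const[OF integrable_diff[OF fi gi]]) (use h freeze in auto)
  moreover have "integral {a..a+h} f = integral {a..a+h} (\<lambda>\<tau>. f \<tau> - g \<tau>) + integral {a..a+h} g"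
    using integral_diff[OF fi gi] by simp
  ultimately have "norm (integral {a..a+h} f) \<le> (e1 + op_bound T * (2 * Lp * e2)) * h + h * (op_bound T * e3)"
    using I_g norm_triangle_le by (smt (verit) norm_triangle_ineq)
  then show ?thesis
    by (simp add: f_def[abs_def] algebra_simps)
qed

lemma averaging_integral_partition_estimate:
  assumes l: "0 < l" and h: "0 < h" and t: "t = h + real m * h" and tT: "t \<le> T"
    and uc: "continuous_on {0..} u"
    and SU: "\<And>\<sigma> \<sigma>' y. \<sigma> \<in> {0..T} \<Longrightarrow> \<sigma>' \<in> {0..T} \<Longrightarrow> y \<in> C \<Longrightarrow> \<bar>\<sigma> - \<sigma>'\<bar> \<le> h \<Longrightarrow>
      dist (S \<sigma> y) (S \<sigma>' y) \<le> e1"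
    and UU: "\<And>\<tau> \<tau>'. \<tau> \<in> {0..T} \<Longrightarrow> \<tau>' \<in> {0..T} \<Longrightarrow> \<bar>\<tau> - \<tau>'\<bar> \<le> h \<Longrightarrow> norm (u \<tau> - u \<tau>') \<le> e2"
    and yC: "\<And>\<tau>. \<tau> \<in> {0..T} \<Longrightarrow> F (\<tau> / l) (u \<tau>) - Fh (u \<tau>) \<in> C"
    and LF: "\<And>s \<tau> \<tau>'. 0 \<le> s \<Longrightarrow> \<tau> \<in> {0..T} \<Longrightarrow> \<tau>' \<in> {0..T} \<Longrightarrow>
      norm (F s (u \<tau>) - F s (u \<tau>')) \<le> Lp * norm (u \<tau> - u \<tau>')"
    and LFh: "\<And>\<tau> \<tau>'. \<tau> \<in> {0..T} \<Longrightarrow> \<tau>' \<in> {0..T} \<Longrightarrow>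
      norm (Fh (u \<tau>) - Fh (u \<tau>')) \<le> Lp * norm (u \<tau> - u \<tau>')"
    and Lp: "0 \<le> Lp"
    and avg: "\<And>a. a \<in> {0<..T} \<Longrightarrow> norm (time_avg (h / l) (a / l) (u a) - Fh (u a)) \<le> e3"
    and initial: "\<And>\<tau>. \<tau> \<in> {0..h} \<Longrightarrow> norm (S (t - \<tau>) (F (\<tau> / l) (u \<tau>) - Fh (u \<tau>))) \<le> D"
  shows "norm (integral {0..t} (\<lambda>\<tau>. S (t - \<tau>) (F (\<tau> / l) (u \<tau>) - Fh (u \<tau>))))
    \<le> D * h + real m * (h * (e1 + op_bound T * (2 * Lp * e2) + op_bound T * e3))"
  unfolding t
proof (rule norm_integral_le_initial_and_pieces)
  show "(\<lambda>\<tau>. S (h + real m * h - \<tau>) (F (\<tau> / l) (u \<tau>) - Fh (u \<tau>))) integrable_on {0..h + real m * h}"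
    by (rule integrable_continuous_real[OF continuous_on_averaging_integrand[OF l uc]])
  fix j assume j: "j < m"
  define a where "a = h + real j * h"
  have "(real j + 1) * h \<le> real m * h"
    using j h by (intro mult_right_mono) auto
  then have "a + h \<le> h + real m * h" by (simp add: a_def algebra_simps)
  moreover have "0 < a" using h by (simp add: a_def add_pos_nonneg)
  ultimately have "norm (integral {a..a+h} (\<lambda>\<tau>. S (h + real m * h - \<tau>) (F (\<tau> / l) (u \<tau>) - Fh (u \<tau>))))
      \<le> h * (e1 + op_bound T * (2 * Lp * e2) + op_bound T * e3)"
    using t tT h by (intro averaging_piece_estimate[OF l h _ _ _ uc SU UU yC LF LFh Lp avg]) auto
  then show "norm (integral {h + real j * h..h + real (Suc j) * h}
      (\<lambda>\<tau>. S (h + real m * h - \<tau>) (F (\<tau> / l) (u \<tau>) - Fh (u \<tau>))))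
      \<le> h * (e1 + op_bound T * (2 * Lp * e2) + op_bound T * e3)"
    by (simp add: a_def algebra_simps)
qed (use h initial t in auto)

lemma norm_averaging_integrand_le:
  assumes "0 < l" "0 \<le> \<tau>" "\<tau> \<le> t" "t \<le> T"
  shows "norm (S (t - \<tau>) (F (\<tau> / l) w - Fh w)) \<le> op_bound T * (2 * cF * (1 + norm w))"
proof -
  have "norm (F (\<tau> / l) w - Fh w) \<le> norm (F (\<tau> / l) w) + norm (Fh w)"
    by (rule norm_triangle_ineq4)
  also have "\<dots> \<le> 2 * cF * (1 + norm w)"
    using cF(2)[of "\<tau> / l" w] norm_Fh_le[of w] assms by simp
  finally show ?thesis
    using norm_S_le_op_bound[of \<tau> t T] assms op_bound_pos[of T]
    by (intro order_trans[OF norm_blinfun] mult_mono) auto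
qed

lemma averaging_integral_le_at_scale:
  assumes uc: "continuous_on {0..} u" and e: "0 < e"
  obtains \<delta>0 T0 D where "0 < \<delta>0" "0 < T0" "0 < D"
    "\<And>l \<tau> t. 0 < l \<Longrightarrow> 0 \<le> \<tau> \<Longrightarrow> \<tau> \<le> t \<Longrightarrow> t \<le> T \<Longrightarrow>
      norm (S (t - \<tau>) (F (\<tau> / l) (u \<tau>) - Fh (u \<tau>))) \<le> D"
    "\<And>l h m. 0 < l \<Longrightarrow> 0 < h \<Longrightarrow> h < \<delta>0 \<Longrightarrow> T0 \<le> h / l \<Longrightarrow> h + real m * h \<le> T \<Longrightarrow>
      norm (integral {0..h + real m * h} (\<lambda>\<tau>. S (h + real m * h - \<tau>) (F (\<tau> / l) (u \<tau>) - Fh (u \<tau>))))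
        \<le> D * h + real m * h * e"
proof -
  have ucT: "continuous_on {0..T} u" by (rule continuous_on_subset[OF uc]) auto
  define U where "U = u ` {0..T}"
  have U: "compact U" unfolding U_def by (rule compact_continuous_image[OF ucT compact_Icc])
  obtain B where B: "0 < B" "\<And>\<tau>. \<tau> \<in> {0..T} \<Longrightarrow> norm (u \<tau>) \<le> B"
    using compact_imp_bounded[OF U] unfolding bounded_pos U_def by blast
  obtain C where C: "compact C" "\<And>s w. 0 \<le> s \<Longrightarrow> w \<in> U \<Longrightarrow> F s w - Fh w \<in> C"
    using compact_F_minus_Fh_values[OF U] by blast
  obtain Lp where Lp: "0 \<le> Lp"
    "\<And>s x y. 0 \<le> s \<Longrightarrow> x \<in> U \<Longrightarrow> y \<in> U \<Longrightarrow> norm (F s x - F s y) \<le> Lp * norm (x - y)"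
    "\<And>x y. x \<in> U \<Longrightarrow> y \<in> U \<Longrightarrow> norm (Fh x - Fh y) \<le> Lp * norm (x - y)"
    using F_Fh_lipschitz_on_bounded[OF compact_imp_bounded[OF U]] by blast
  define N where "N = op_bound T"
  have N: "0 < N" by (simp add: N_def op_bound_pos)
  define e1 where "e1 = e / 3"
  define e2 where "e2 = e / (3 * (2 * N * Lp + 1))"
  define e3 where "e3 = e / (3 * (N + 1))"
  have NLp: "0 \<le> N * Lp" using N Lp(1) by simp
  have e': "0 < e1" "0 < e2" "0 < e3"
    using e N NLp by (auto simp: e1_def e2_def e3_def intro!: divide_pos_pos mult_pos_pos)
  have "N * (2 * Lp * e2) \<le> e / 3" "N * e3 \<le> e / 3"
    using e N NLp by (simp_all add: e2_def e3_def field_simps)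
  then have e_sum: "e1 + N * (2 * Lp * e2) + N * e3 \<le> e" by (simp add: e1_def)
  obtain \<delta>1 where \<delta>1: "0 < \<delta>1" "\<And>\<sigma> \<sigma>' y. \<sigma> \<in> {0..T} \<Longrightarrow> \<sigma>' \<in> {0..T} \<Longrightarrow> y \<in> C \<Longrightarrow>
      \<bar>\<sigma> - \<sigma>'\<bar> < \<delta>1 \<Longrightarrow> dist (S \<sigma> y) (S \<sigma>' y) < e1"
    using S_uniformly_equicontinuous_on_compact[OF C(1) e'(1)] by blast
  obtain \<delta>2 where \<delta>2: "0 < \<delta>2" "\<And>\<tau> \<tau>'. \<tau> \<in> {0..T} \<Longrightarrow> \<tau>' \<in> {0..T} \<Longrightarrow>
      dist \<tau>' \<tau> < \<delta>2 \<Longrightarrow> dist (u \<tau>') (u \<tau>) < e2"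
    using compact_uniformly_continuous[OF ucT compact_Icc] e'(2)
    unfolding uniformly_continuous_on_def by metis
  obtain T0 where T0: "0 < T0" "\<And>T' h w. T0 \<le> T' \<Longrightarrow> 0 < h \<Longrightarrow> w \<in> U \<Longrightarrow>
      dist (time_avg T' h w) (Fh w) < e3"
    using time_avg_approx_Fh_uniform_on_compact[OF U e'(3)] by blast
  define D where "D = N * (2 * cF * (1 + B))"
  have integrand_le: "norm (S (t - \<tau>) (F (\<tau> / l) (u \<tau>) - Fh (u \<tau>))) \<le> D"
    if "0 < l" "0 \<le> \<tau>" "\<tau> \<le> t" "t \<le> T" for l \<tau> t
    using norm_averaging_integrand_le[OF that, of "u \<tau>"] B(2)[of \<tau>] that N cF(1)
    by (auto simp: D_def N_def intro: order_trans mult_left_mono)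
  show ?thesis
  proof (rule that[of "min \<delta>1 \<delta>2" T0 D])
    show "0 < D" using N cF(1) B(1) by (simp add: D_def add_pos_nonneg)
    fix l h m assume l: "0 < l" and h: "0 < h" "h < min \<delta>1 \<delta>2" and hl: "T0 \<le> h / l"
      and hm: "h + real m * h \<le> T"
    have "norm (integral {0..h + real m * h} (\<lambda>\<tau>. S (h + real m * h - \<tau>) (F (\<tau> / l) (u \<tau>) - Fh (u \<tau>))))
        \<le> D * h + real m * (h * (e1 + N * (2 * Lp * e2) + N * e3))"
      unfolding N_def
    proof (intro averaging_integral_partition_estimate[OF l h(1) refl hm uc _ _ _ _ _ Lp(1)])
      show "dist (S \<sigma> y) (S \<sigma>' y) \<le> e1"
        if "\<sigma> \<in> {0..T}" "\<sigma>' \<in> {0..T}" "y \<in> C" "\<bar>\<sigma> - \<sigma>'\<bar> \<le> h" for \<sigma> \<sigma>' y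
        using \<delta>1(2)[OF that(1-3)] that(4) h by simp
      show "norm (u \<tau> - u \<tau>') \<le> e2" if "\<tau> \<in> {0..T}" "\<tau>' \<in> {0..T}" "\<bar>\<tau> - \<tau>'\<bar> \<le> h" for \<tau> \<tau>'
        using \<delta>2(2)[OF that(2,1)] that(3) h by (simp add: dist_norm dist_real_def)
      show "F (\<tau> / l) (u \<tau>) - Fh (u \<tau>) \<in> C" if "\<tau> \<in> {0..T}" for \<tau>
        using C(2) that l by (simp add: U_def)
      show "norm (time_avg (h / l) (a / l) (u a) - Fh (u a)) \<le> e3" if "a \<in> {0<..T}" for a
        using T0(2)[OF hl, of "a / l" "u a"] that l by (simp add: U_def dist_norm)
      show "norm (S (h + real m * h - \<tau>) (F (\<tau> / l) (u \<tau>) - Fh (u \<tau>))) \<le> D" if "\<tau> \<in> {0..h}" for \<tau>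
      proof -
        have "0 \<le> real m * h" using h(1) by simp
        moreover have "\<tau> \<le> h" using that by simp
        ultimately have "\<tau> \<le> h + real m * h" by linarith
        then show ?thesis using integrand_le[OF l, of \<tau> "h + real m * h"] that hm by auto
      qed
    qed (use l Lp in \<open>auto simp: U_def\<close>)
    also have "\<dots> \<le> D * h + real m * h * e"
      using mult_left_mono[OF e_sum, of "real m * h"] h(1) by (simp add: mult.assoc)
    finally show "norm (integral {0..h + real m * h}
        (\<lambda>\<tau>. S (h + real m * h - \<tau>) (F (\<tau> / l) (u \<tau>) - Fh (u \<tau>)))) \<le> D * h + real m * h * e" .
  qed (use \<delta>1 \<delta>2 T0 integrand_le in auto)
qed

text \<open>The interval \<open>[0,t]\<close> is cut into pieces whose length \<open>h\<close> is small compared with the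
  moduli of continuity of \<open>S\<close> and \<open>u\<close>, but large compared with \<open>l\<close>; very short times \<open>t\<close> are
  handled by the bound \<open>D\<close> on the integrand.\<close>

lemma averaging_integral_small:
  assumes uc: "continuous_on {0..} u" and T: "0 < T" and \<epsilon>: "0 < \<epsilon>"
  shows "\<exists>\<delta>>0. \<forall>l t. 0 < l \<and> l < \<delta> \<and> t \<in> {0..T} \<longrightarrow>
    norm (integral {0..t} (\<lambda>\<tau>. S (t - \<tau>) (F (\<tau> / l) (u \<tau>) - Fh (u \<tau>)))) \<le> \<epsilon>"
proof -
  define e where "e = \<epsilon> / (2 * (T + 1))"
  have e: "0 < e" using \<epsilon> T by (simp add: e_def)
  obtain \<delta>0 T0 D where \<delta>0: "0 < \<delta>0" and T0: "0 < T0" and D: "0 < D"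
    and integrand_le: "\<And>l \<tau> t. 0 < l \<Longrightarrow> 0 \<le> \<tau> \<Longrightarrow> \<tau> \<le> t \<Longrightarrow> t \<le> T \<Longrightarrow>
      norm (S (t - \<tau>) (F (\<tau> / l) (u \<tau>) - Fh (u \<tau>))) \<le> D"
    and at_scale: "\<And>l h m. 0 < l \<Longrightarrow> 0 < h \<Longrightarrow> h < \<delta>0 \<Longrightarrow> T0 \<le> h / l \<Longrightarrow> h + real m * h \<le> T \<Longrightarrow>
      norm (integral {0..h + real m * h} (\<lambda>\<tau>. S (h + real m * h - \<tau>) (F (\<tau> / l) (u \<tau>) - Fh (u \<tau>))))
        \<le> D * h + real m * h * e"
    using averaging_integral_le_at_scale[OF uc e, of T] by blast
  obtain m :: nat where m: "T / \<delta>0 < real m" "2 * T * D / \<epsilon> < real m"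
    using reals_Archimedean2[of "max (T / \<delta>0) (2 * T * D / \<epsilon>)"] by auto
  define \<delta> where "\<delta> = \<epsilon> / D / (real (Suc m) * T0)"
  show ?thesis
  proof (intro exI[of _ \<delta>] conjI allI impI)
    show "0 < \<delta>" using \<epsilon> D T0 by (simp add: \<delta>_def)
    fix l t assume "0 < l \<and> l < \<delta> \<and> t \<in> {0..T}"
    then have l: "0 < l" "l < \<delta>" and t: "0 \<le> t" "t \<le> T" by auto
    let ?f = "\<lambda>\<tau>. S (t - \<tau>) (F (\<tau> / l) (u \<tau>) - Fh (u \<tau>))"
    show "norm (integral {0..t} ?f) \<le> \<epsilon>"
    proof (cases "t \<le> \<epsilon> / D")
      case True
      have "norm (integral {0..t} ?f) \<le> D * (t - 0)"
        by (rule norm_integral_le_const)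
          (use l t integrand_le in \<open>auto intro: integrable_continuous_real continuous_on_averaging_integrand[OF _ uc]\<close>)
      also have "\<dots> \<le> \<epsilon>" using True D by (simp add: field_simps)
      finally show ?thesis .
    next
      case False
      define h where "h = t / real (Suc m)"
      have "0 < \<epsilon> / D" using D \<epsilon> by simp
      then have h: "0 < h" "h \<le> T / real (Suc m)"
        using False t by (simp_all add: h_def divide_right_mono)
      have "real (Suc m) * h = t" by (simp add: h_def)
      then have th: "t = h + real m * h" by (simp add: algebra_simps)
      have "T < real m * \<delta>0"
        using m(1) \<delta>0 by (simp add: pos_divide_less_eq)
      also have "\<dots> \<le> real (Suc m) * \<delta>0"
        using \<delta>0 by (intro mult_right_mono) auto
      finally have "h < \<delta>0"
        using h(2) by (smt (verit) mult.commute of_nat_0_less_iff pos_divide_less_eq zero_less_Suc)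
      have "\<epsilon> / D / real (Suc m) < h"
        unfolding h_def by (rule divide_strict_right_mono) (use False in auto)
      moreover have "l * T0 < \<delta> * T0" using l T0 by simp
      moreover have "\<delta> * T0 = \<epsilon> / D / real (Suc m)" using T0 by (simp add: \<delta>_def)
      ultimately have "T0 \<le> h / l" using l by (simp add: field_simps)
      then have "norm (integral {0..t} ?f) \<le> D * h + real m * h * e"
        using at_scale[OF l(1) h(1) \<open>h < \<delta>0\<close>] th t by simp
      also have "\<dots> \<le> \<epsilon> / 2 + T * e"
      proof (intro add_mono)
        have "D * h \<le> D * (T / real (Suc m))" using h(2) D by (intro mult_left_mono) auto
        also have "\<dots> \<le> \<epsilon> / 2" using m(2) D T \<epsilon> by (simp add: field_simps)
        finally show "D * h \<le> \<epsilon> / 2" .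
        show "real m * h * e \<le> T * e"
          using th t h(1) e by (intro mult_right_mono) auto
      qed
      also have "\<dots> \<le> \<epsilon>" using T \<epsilon> by (simp add: e_def field_simps)
      finally show ?thesis .
    qed
  qed
qed

lemma mild_solution_eq:
  assumes "mild_solution (R l) l F v u" "0 \<le> t"
  shows "u t = R l t 0 v + integral {0..t} (\<lambda>\<tau>. R l t \<tau> (F (\<tau> / l) (u \<tau>)))"
    and "(\<lambda>\<tau>. R l t \<tau> (F (\<tau> / l) (u \<tau>))) integrable_on {0..t}"
  using assms by (auto simp: mild_solution_def integral_unique)

lemma avg_mild_solution_eq:
  assumes "avg_mild_solution S Fh u0 u" "0 \<le> t"
  shows "u t = S t u0 + integral {0..t} (\<lambda>\<tau>. S (t - \<tau>) (Fh (u \<tau>)))"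
  using assms by (auto simp: avg_mild_solution_def integral_unique)

lemma norm_mild_solution_le:
  assumes l: "0 < l" and u: "mild_solution (R l) l F v u" and t: "t \<in> {0..T}"
  shows "norm (u t) \<le> 2 * (op_bound T * norm v + op_bound T * cF * T) * exp (2 * (op_bound T * cF + 1) * T)"
proof (rule volterra_solution_norm_bound[where G = "\<lambda>s v. F (s / l) v"])
  show "volterra_solution (R l) (\<lambda>s v. F (s / l) v) (\<lambda>t. R l t 0 v) T u"
    using u mild_solution_eq(1)[OF u] by (auto simp: volterra_solution_def mild_solution_def
        intro: continuous_on_subset)
  show "norm (R l t 0 v) \<le> op_bound T * norm v" if "t \<in> {0..T}" for t
    using that norm_R_le_op_bound[OF l, of 0 t T] op_bound_pos[of T]
    by (intro order_trans[OF norm_blinfun] mult_right_mono) auto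
qed (use l t mild_solution_eq(2)[OF u] norm_R_le_op_bound[OF l] less_imp_le[OF op_bound_pos] cF in auto)

text \<open>The defect of \<open>u\<close> in the \<open>l\<close>-problem has three parts, controlled by (A2) at \<open>u\<^sub>0\<close>,
  by (A2) uniformly on the compact set of values of \<open>F\<close> along \<open>u\<close>, and by averaging.\<close>

lemma mild_defect_small:
  assumes u: "avg_mild_solution S Fh u0 u" and T: "0 < T" and \<epsilon>: "0 < \<epsilon>"
  shows "\<exists>\<delta>>0. \<forall>l v t. 0 < l \<and> l < \<delta> \<and> dist v u0 < \<delta> \<and> t \<in> {0..T} \<longrightarrow>
    norm (R l t 0 v + integral {0..t} (\<lambda>\<tau>. R l t \<tau> (F (\<tau> / l) (u \<tau>))) - u t) \<le> \<epsilon>"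
proof -
  have uc: "continuous_on {0..} u" using u by (simp add: avg_mild_solution_def)
  have ucT: "continuous_on {0..T} u" by (rule continuous_on_subset[OF uc]) auto
  obtain \<delta>1 where \<delta>1: "0 < \<delta>1" "\<forall>l v t s. 0 < l \<and> l < \<delta>1 \<and> dist v u0 < \<delta>1 \<and> 0 \<le> s \<and> s \<le> t \<and> t \<le> T
      \<longrightarrow> dist (R l t s v) (S (t - s) u0) < \<epsilon> / 3"
    using A2_limit[of "\<epsilon> / 3" u0 T] \<epsilon> by auto
  define W where "W = closure {F s w | s w. 0 \<le> s \<and> w \<in> u ` {0..T}}"
  have W: "compact W" unfolding W_def
    by (rule compact_closure_F_values[OF compact_continuous_image[OF ucT compact_Icc]])
  have FW: "F (\<tau> / l) (u \<tau>) \<in> W" if "\<tau> \<in> {0..T}" "0 < l" for \<tau> l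
    unfolding W_def using that
    by (intro closure_subset[THEN subsetD] CollectI exI[of _ "\<tau> / l"] exI[of _ "u \<tau>"]) auto
  obtain \<delta>2 where \<delta>2: "0 < \<delta>2" "\<forall>l y s t. 0 < l \<and> l < \<delta>2 \<and> y \<in> W \<and> 0 \<le> s \<and> s \<le> t \<and> t \<le> T
      \<longrightarrow> dist (R l t s y) (S (t - s) y) < \<epsilon> / (3 * (T + 1))"
    using R_approx_S_uniform_on_compact[OF W, of "\<epsilon> / (3 * (T + 1))" T] \<epsilon> T by auto
  obtain \<delta>3 where \<delta>3: "0 < \<delta>3" "\<forall>l t. 0 < l \<and> l < \<delta>3 \<and> t \<in> {0..T} \<longrightarrow>
      norm (integral {0..t} (\<lambda>\<tau>. S (t - \<tau>) (F (\<tau> / l) (u \<tau>) - Fh (u \<tau>)))) \<le> \<epsilon> / 3"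
    using averaging_integral_small[OF uc T, of "\<epsilon> / 3"] \<epsilon> by auto
  show ?thesis
  proof (intro exI[of _ "min \<delta>1 (min \<delta>2 \<delta>3)"] conjI allI impI)
    show "0 < min \<delta>1 (min \<delta>2 \<delta>3)" using \<delta>1 \<delta>2 \<delta>3 by simp
    fix l v t assume "0 < l \<and> l < min \<delta>1 (min \<delta>2 \<delta>3) \<and> dist v u0 < min \<delta>1 (min \<delta>2 \<delta>3) \<and> t \<in> {0..T}"
    then have l: "0 < l" "l < \<delta>1" "l < \<delta>2" "l < \<delta>3" and v: "dist v u0 < \<delta>1" and t: "0 \<le> t" "t \<le> T"
      by auto
    define f1 where "f1 \<tau> = R l t \<tau> (F (\<tau> / l) (u \<tau>))" for \<tau>
    define f2 where "f2 \<tau> = S (t - \<tau>) (F (\<tau> / l) (u \<tau>))" for \<tau>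
    define f3 where "f3 \<tau> = S (t - \<tau>) (Fh (u \<tau>))" for \<tau>
    have Fu: "continuous_on {0..t} (\<lambda>\<tau>. F (\<tau> / l) (u \<tau>))"
      by (rule continuous_on_F_compose)
        (use l uc in \<open>auto intro!: continuous_intros intro: continuous_on_subset\<close>)
    have Fhu: "continuous_on {0..t} (\<lambda>\<tau>. Fh (u \<tau>))"
      by (rule continuous_on_compose2[OF continuous_Fh continuous_on_subset[OF uc]]) auto
    have i1: "f1 integrable_on {0..t}"
      unfolding f1_def[abs_def] by (rule integrable_continuous_real[OF continuous_on_R_apply[OF l(1) Fu]])
    have i2: "f2 integrable_on {0..t}"
      unfolding f2_def[abs_def] by (rule integrable_continuous_real[OF continuous_on_S_apply[OF Fu]])
    have i3: "f3 integrable_on {0..t}"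
      unfolding f3_def[abs_def] by (rule integrable_continuous_real[OF continuous_on_S_apply[OF Fhu]])
    have tri: "norm (x + y + z) \<le> norm x + norm y + norm z" for x y z :: 'e
      using norm_triangle_ineq[of "x + y" z] norm_triangle_ineq[of x y] by linarith
    have eq: "R l t 0 v + integral {0..t} f1 - u t
        = (R l t 0 v - S t u0) + integral {0..t} (\<lambda>\<tau>. f1 \<tau> - f2 \<tau>) + integral {0..t} (\<lambda>\<tau>. f2 \<tau> - f3 \<tau>)"
      using avg_mild_solution_eq[OF u t(1)] integral_diff[OF i1 i2] integral_diff[OF i2 i3]
      by (simp add: f3_def[abs_def])
    have "norm (R l t 0 v + integral {0..t} f1 - u t) \<le> norm (R l t 0 v - S t u0)
        + norm (integral {0..t} (\<lambda>\<tau>. f1 \<tau> - f2 \<tau>)) + norm (integral {0..t} (\<lambda>\<tau>. f2 \<tau> - f3 \<tau>))"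
      unfolding eq by (rule tri)
    moreover have "norm (R l t 0 v - S t u0) < \<epsilon> / 3"
      using \<delta>1(2)[rule_format, of l v 0 t] l v t by (simp add: dist_norm)
    moreover have "norm (integral {0..t} (\<lambda>\<tau>. f1 \<tau> - f2 \<tau>)) \<le> \<epsilon> / 3"
    proof -
      have "norm (integral {0..t} (\<lambda>\<tau>. f1 \<tau> - f2 \<tau>)) \<le> \<epsilon> / (3 * (T + 1)) * (t - 0)"
      proof (rule norm_integral_le_const[OF integrable_diff[OF i1 i2] t(1)])
        show "norm (f1 \<tau> - f2 \<tau>) \<le> \<epsilon> / (3 * (T + 1))" if "\<tau> \<in> {0..t}" for \<tau>
          using \<delta>2(2)[rule_format, of l "F (\<tau> / l) (u \<tau>)" \<tau> t] FW[of \<tau> l] that l t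
          by (simp add: f1_def f2_def dist_norm)
      qed
      also have "\<dots> \<le> \<epsilon> / (3 * (T + 1)) * (T + 1)"
        using t T \<epsilon> by (intro mult_left_mono) auto
      also have "\<dots> = \<epsilon> / 3"
        using T by (simp add: field_simps)
      finally show ?thesis .
    qed
    moreover have "norm (integral {0..t} (\<lambda>\<tau>. f2 \<tau> - f3 \<tau>)) \<le> \<epsilon> / 3"
      using \<delta>3(2) l t by (simp add: f2_def f3_def blinfun.diff_right)
    ultimately have "norm (R l t 0 v + integral {0..t} f1 - u t) \<le> \<epsilon>" by linarith
    then show "norm (R l t 0 v + integral {0..t} (\<lambda>\<tau>. R l t \<tau> (F (\<tau> / l) (u \<tau>))) - u t) \<le> \<epsilon>"
      by (simp add: f1_def[abs_def])
  qed
qed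

lemma norm_mild_solution_diff_le:
  assumes l: "0 < l" and w: "mild_solution (R l) l F v w" and uc: "continuous_on {0..T} u"
    and defect: "\<And>t. t \<in> {0..T} \<Longrightarrow>
      norm (R l t 0 v + integral {0..t} (\<lambda>\<tau>. R l t \<tau> (F (\<tau> / l) (u \<tau>))) - u t) \<le> \<eta>"
    and L: "\<And>s \<tau>. 0 \<le> s \<Longrightarrow> \<tau> \<in> {0..T} \<Longrightarrow> norm (F s (w \<tau>) - F s (u \<tau>)) \<le> L * norm (w \<tau> - u \<tau>)"
    and L0: "0 \<le> L" and \<eta>: "0 \<le> \<eta>" and x: "x \<in> {0..T}"
  shows "norm (w x - u x) \<le> 2 * \<eta> * exp (2 * (op_bound T * L + 1) * T)"
proof -
  define \<phi> where "\<phi> s = norm (w s - u s)" for s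
  have \<phi>c: "continuous_on {0..T} \<phi>"
    using w uc unfolding \<phi>_def mild_solution_def
    by (auto intro!: continuous_intros intro: continuous_on_subset)
  have "\<phi> t \<le> \<eta> + (op_bound T * L + 1) * integral {0..t} \<phi>" if t: "t \<in> {0..T}" for t
  proof -
    have \<phi>i: "\<phi> integrable_on {0..t}"
      by (rule integrable_continuous_real[OF continuous_on_subset[OF \<phi>c]]) (use t in auto)
    have i1: "(\<lambda>\<tau>. R l t \<tau> (F (\<tau> / l) (w \<tau>))) integrable_on {0..t}"
      using mild_solution_eq(2)[OF w] t by simp
    have "continuous_on {0..t} (\<lambda>\<tau>. F (\<tau> / l) (u \<tau>))"
      by (rule continuous_on_F_compose) (use l t uc in \<open>auto intro!: continuous_intros intro: continuous_on_subset\<close>)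
    then have i2: "(\<lambda>\<tau>. R l t \<tau> (F (\<tau> / l) (u \<tau>))) integrable_on {0..t}"
      by (rule integrable_continuous_real[OF continuous_on_R_apply[OF l]])
    have "w t - u t = (R l t 0 v + integral {0..t} (\<lambda>\<tau>. R l t \<tau> (F (\<tau> / l) (u \<tau>))) - u t)
        + integral {0..t} (\<lambda>\<tau>. R l t \<tau> (F (\<tau> / l) (w \<tau>) - F (\<tau> / l) (u \<tau>)))"
      using mild_solution_eq(1)[OF w, of t] t integral_diff[OF i1 i2]
      by (simp add: blinfun.diff_right algebra_simps)
    then have "\<phi> t \<le> norm (R l t 0 v + integral {0..t} (\<lambda>\<tau>. R l t \<tau> (F (\<tau> / l) (u \<tau>))) - u t)
        + norm (integral {0..t} (\<lambda>\<tau>. R l t \<tau> (F (\<tau> / l) (w \<tau>) - F (\<tau> / l) (u \<tau>))))"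
      unfolding \<phi>_def by (simp only: norm_triangle_ineq)
    also have "\<dots> \<le> \<eta> + op_bound T * integral {0..t} (\<lambda>\<tau>. L * \<phi> \<tau>)"
    proof (rule add_mono[OF defect[OF t]])
      show "norm (integral {0..t} (\<lambda>\<tau>. R l t \<tau> (F (\<tau> / l) (w \<tau>) - F (\<tau> / l) (u \<tau>))))
          \<le> op_bound T * integral {0..t} (\<lambda>\<tau>. L * \<phi> \<tau>)"
      proof (rule norm_integral_blinfun_apply_le)
        show "(\<lambda>\<tau>. R l t \<tau> (F (\<tau> / l) (w \<tau>) - F (\<tau> / l) (u \<tau>))) integrable_on {0..t}"
          using integrable_diff[OF i1 i2] by (simp add: blinfun.diff_right)
        show "(\<lambda>\<tau>. L * \<phi> \<tau>) integrable_on {0..t}"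
          using integrable_on_cmult_left[OF \<phi>i] by simp
      qed (use t l norm_R_le_op_bound[OF l] L in \<open>auto simp: \<phi>_def\<close>)
    qed
    also have "\<dots> \<le> \<eta> + (op_bound T * L + 1) * integral {0..t} \<phi>"
    proof -
      have "0 \<le> integral {0..t} \<phi>" by (rule integral_nonneg[OF \<phi>i]) (simp add: \<phi>_def)
      then show ?thesis by (simp add: distrib_right)
    qed
    finally show ?thesis .
  qed
  moreover have "0 < op_bound T * L + 1"
    using L0 op_bound_pos[of T] by (simp add: add_nonneg_pos)
  ultimately show ?thesis
    using gronwall_exp_bound[OF \<phi>c _ \<eta>, of "op_bound T * L + 1" x] x by (simp add: \<phi>_def)
qed

text \<open>The Lipschitz constant of \<open>F\<close> is taken on a ball containing all the solutions, which
  exists by the a priori bound.\<close>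

lemma mild_solutions_converge_on:
  assumes lam_pos: "\<And>n. 0 < lam n" and lam_lim: "lam \<longlonglongrightarrow> 0" and ubar_lim: "ubar \<longlonglongrightarrow> u0"
    and us: "\<And>n. mild_solution (R (lam n)) (lam n) F (ubar n) (us n)"
    and u: "avg_mild_solution S Fh u0 u" and T: "0 < T"
  shows "uniform_limit {0..T} us u sequentially"
proof -
  define N where "N = op_bound T"
  have N: "0 < N" by (simp add: N_def op_bound_pos)
  have uc: "continuous_on {0..T} u" using u by (auto simp: avg_mild_solution_def intro: continuous_on_subset)
  obtain K where K: "\<And>n. norm (ubar n) \<le> K"
    using convergent_imp_Bseq[of ubar] ubar_lim by (auto simp: convergent_def Bseq_def)
  obtain Bu where "\<forall>x\<in>u ` {0..T}. norm x \<le> Bu"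
    using compact_imp_bounded[OF compact_continuous_image[OF uc compact_Icc]] unfolding bounded_iff by blast
  then have Bu: "\<And>t. t \<in> {0..T} \<Longrightarrow> norm (u t) \<le> Bu" by blast
  define B where "B = max (2 * (N * K + N * cF * T) * exp (2 * (N * cF + 1) * T)) Bu"
  have B: "us n t \<in> cball 0 B" "u t \<in> cball 0 B" if "t \<in> {0..T}" for n t
  proof -
    have "norm (us n t) \<le> 2 * (N * norm (ubar n) + N * cF * T) * exp (2 * (N * cF + 1) * T)"
      using norm_mild_solution_le[OF lam_pos us that] by (simp add: N_def)
    also have "\<dots> \<le> 2 * (N * K + N * cF * T) * exp (2 * (N * cF + 1) * T)"
      using K[of n] N by (simp add: mult_left_mono)
    finally show "us n t \<in> cball 0 B" by (simp add: B_def)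
    show "u t \<in> cball 0 B" using Bu[OF that] by (simp add: B_def)
  qed
  obtain L0 where L0: "\<forall>t\<ge>0. \<forall>x\<in>cball 0 B. \<forall>y\<in>cball 0 B. dist (F t x) (F t y) \<le> L0 * dist x y"
    using A3_lip[of "cball 0 B"] by auto
  have L: "norm (F s (us n \<tau>) - F s (u \<tau>)) \<le> max L0 0 * norm (us n \<tau> - u \<tau>)"
    if "0 \<le> s" "\<tau> \<in> {0..T}" for s n \<tau>
  proof -
    have "norm (F s (us n \<tau>) - F s (u \<tau>)) \<le> L0 * norm (us n \<tau> - u \<tau>)"
      using L0 B[OF that(2)] that(1) by (simp add: dist_norm)
    also have "\<dots> \<le> max L0 0 * norm (us n \<tau> - u \<tau>)" by (simp add: mult_right_mono)
    finally show ?thesis .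
  qed
  define \<kappa> where "\<kappa> = N * max L0 0 + 1"
  show ?thesis
    unfolding uniform_limit_iff
  proof (intro allI impI)
    fix \<epsilon> :: real assume \<epsilon>: "0 < \<epsilon>"
    define \<eta> where "\<eta> = \<epsilon> / (4 * exp (2 * \<kappa> * T))"
    have \<eta>: "0 < \<eta>" using \<epsilon> by (simp add: \<eta>_def)
    obtain \<delta> where \<delta>: "0 < \<delta>" "\<And>l v t. 0 < l \<Longrightarrow> l < \<delta> \<Longrightarrow> dist v u0 < \<delta> \<Longrightarrow> t \<in> {0..T} \<Longrightarrow>
        norm (R l t 0 v + integral {0..t} (\<lambda>\<tau>. R l t \<tau> (F (\<tau> / l) (u \<tau>))) - u t) \<le> \<eta>"
      using mild_defect_small[OF u T \<eta>] by blast
    have "\<forall>\<^sub>F n in sequentially. dist (lam n) 0 < \<delta>" "\<forall>\<^sub>F n in sequentially. dist (ubar n) u0 < \<delta>"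
      using lam_lim ubar_lim \<delta>(1) unfolding tendsto_iff by blast+
    then have "\<forall>\<^sub>F n in sequentially. lam n < \<delta> \<and> dist (ubar n) u0 < \<delta>"
      by eventually_elim (simp add: dist_real_def)
    then show "\<forall>\<^sub>F n in sequentially. \<forall>x\<in>{0..T}. dist (us n x) (u x) < \<epsilon>"
    proof (rule eventually_mono, intro ballI)
      fix n x assume n: "lam n < \<delta> \<and> dist (ubar n) u0 < \<delta>" and x: "x \<in> {0..T}"
      have "norm (us n x - u x) \<le> 2 * \<eta> * exp (2 * \<kappa> * T)"
        using norm_mild_solution_diff_le[OF lam_pos us uc \<delta>(2)[OF lam_pos] L _ _ x] n \<eta>
        by (simp add: \<kappa>_def N_def)
      also have "\<dots> < \<epsilon>" using \<epsilon> by (simp add: \<eta>_def)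
      finally show "dist (us n x) (u x) < \<epsilon>" by (simp add: dist_norm)
    qed
  qed
qed

lemma mild_solution_exists:
  assumes l: "0 < l"
  shows "\<exists>u. mild_solution (R l) l F v u"
proof -
  have "\<exists>u. continuous_on {0..} u \<and>
      (\<forall>t\<ge>0. ((\<lambda>s. R l t s (F (s / l) (u s))) has_integral (u t - R l t 0 v)) {0..t})"
  proof (rule volterra_solution_exists_global[OF R_kernel_continuous[OF l] _ F_rescaled_continuous[OF l]
        _ _ less_imp_le[OF cF(1)]])
    show "\<exists>N\<ge>0. \<forall>s t. 0 \<le> s \<longrightarrow> s \<le> t \<longrightarrow> t \<le> T \<longrightarrow> norm (R l t s) \<le> N" for T
      using norm_R_le_op_bound[OF l] op_bound_pos[of T] by (intro exI[of _ "op_bound T"]) auto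
    show "\<exists>L. \<forall>t\<ge>0. \<forall>x\<in>B. \<forall>y\<in>B. dist (F (t / l) x) (F (t / l) y) \<le> L * dist x y"
      if "bounded B" for B
      using A3_lip[OF that] l by (metis divide_nonneg_pos)
    show "norm (F (t / l) w) \<le> cF * (1 + norm w)" if "0 \<le> t" for t w
      using cF(2) that l by simp
  qed
  then show ?thesis by (simp add: mild_solution_def)
qed

lemma avg_mild_solution_exists: "\<exists>u. avg_mild_solution S Fh u0 u"
proof -
  have "continuous_on ({0..} \<times> UNIV) (\<lambda>p. Fh (snd p))"
    by (rule continuous_on_compose2[OF continuous_Fh]) (auto intro!: continuous_intros)
  then have "\<exists>u. continuous_on {0..} u \<and>
      (\<forall>t\<ge>0. ((\<lambda>s. S (t - s) (Fh (u s))) has_integral (u t - S (t - 0) u0)) {0..t})"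
  proof (intro volterra_solution_exists_global[OF S_kernel_continuous _ _ _ _ less_imp_le[OF cF(1)]])
    show "\<exists>N\<ge>0. \<forall>s t. 0 \<le> s \<longrightarrow> s \<le> t \<longrightarrow> t \<le> T \<longrightarrow> norm (S (t - s)) \<le> N" for T
      using norm_S_le_op_bound op_bound_pos[of T] by (intro exI[of _ "op_bound T"]) auto
  qed (use Fh_lipschitz_on_bounded norm_Fh_le in \<open>auto simp: case_prod_beta\<close>)
  then show ?thesis by (simp add: avg_mild_solution_def)
qed

lemma mild_solutions_converge:
  assumes "\<And>n. 0 < lam n" "lam \<longlonglongrightarrow> 0" "ubar \<longlonglongrightarrow> u0"
    and "\<And>n. mild_solution (R (lam n)) (lam n) F (ubar n) (us n)"
    and "avg_mild_solution S Fh u0 u" and "0 \<le> T"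
  shows "uniform_limit {0..T} us u sequentially"
  using mild_solutions_converge_on[OF assms(1-5), of "T + 1"] assms(6)
  by (auto intro: uniform_limit_on_subset)

end

theorem theorem1p1:
  fixes R :: "real \<Rightarrow> real \<Rightarrow> real \<Rightarrow> ('e::banach \<Rightarrow>\<^sub>L 'e)"
    and S :: "real \<Rightarrow> ('e \<Rightarrow>\<^sub>L 'e)"
    and F :: "real \<Rightarrow> 'e \<Rightarrow> 'e"
    and Fh :: "'e \<Rightarrow> 'e"
    and M \<omega> :: real
    and lam :: "nat \<Rightarrow> real" and ubar :: "nat \<Rightarrow> 'e" and u0 :: 'e
  assumes sep: "separable_space TYPE('e)"
    and evol: "\<And>l. l > 0 \<Longrightarrow> evolution_system (R l)"
    and A1: "M \<ge> 1" "\<And>l t s. l > 0 \<Longrightarrow> 0 \<le> s \<Longrightarrow> s \<le> t \<Longrightarrow>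
               norm (R l t s) \<le> M * exp (\<omega> * (t - s))"
    and A2_semigroup: "C0_semigroup S"
    and A2_limit: "\<And>u T \<epsilon>. \<epsilon> > 0 \<Longrightarrow> \<exists>\<delta>>0. \<forall>l v t s. 0 < l \<and> l < \<delta> \<and> dist v u < \<delta> \<and>
                      0 \<le> s \<and> s \<le> t \<and> t \<le> T \<longrightarrow>
                      dist (blinfun_apply (R l t s) v) (blinfun_apply (S (t - s)) u) < \<epsilon>"
    and A3_cont: "continuous_on ({0..} \<times> UNIV) (\<lambda>(t, v). F t v)"
    and A3_lip: "\<And>B. bounded B \<Longrightarrow> \<exists>L. \<forall>t\<ge>0. \<forall>x\<in>B. \<forall>y\<in>B. dist (F t x) (F t y) \<le> L * dist x y"
    and A3_growth: "\<exists>c>0. \<forall>t\<ge>0. \<forall>v. norm (F t v) \<le> c * (1 + norm v)"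
    and A4_compact: "\<And>u. compact (closure {F t u | t. t \<ge> 0})"
    and A4_loclip: "\<And>u. \<exists>\<delta>>0. \<exists>L. \<forall>x\<in>ball u \<delta>. \<forall>y\<in>ball u \<delta>. dist (Fh x) (Fh y) \<le> L * dist x y"
    and A4_avg: "\<And>u \<epsilon>. \<epsilon> > 0 \<Longrightarrow> \<exists>T0 \<delta>. \<delta> > 0 \<and> (\<forall>T v h. T \<ge> T0 \<and> T > 0 \<and> dist v u < \<delta> \<and> h > 0 \<longrightarrow>
                      dist ((1 / T) *\<^sub>R integral {0..T} (\<lambda>\<tau>. F (\<tau> + h) v)) (Fh u) < \<epsilon>)"
    and lam_pos: "\<And>n. lam n > 0"
    and lam_lim: "lam \<longlonglongrightarrow> 0"
    and ubar_lim: "ubar \<longlonglongrightarrow> u0"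
  shows "(\<forall>n. \<exists>v. mild_solution (R (lam n)) (lam n) F (ubar n) v) \<and>
         (\<exists>u. avg_mild_solution S Fh u0 u) \<and>
         (\<forall>us u. (\<forall>n. mild_solution (R (lam n)) (lam n) F (ubar n) (us n)) \<longrightarrow>
                 avg_mild_solution S Fh u0 u \<longrightarrow>
                 (\<forall>T\<ge>0. uniform_limit {0..T} us u sequentially))"
proof -
  interpret averaging_setting R S F Fh M \<omega>
    by (rule averaging_setting.intro) (fact evol A1 A2_semigroup A2_limit A3_cont A3_lip A3_growth A4_compact A4_avg)+
  show ?thesis
    using mild_solution_exists[OF lam_pos] avg_mild_solution_exists
      mild_solutions_converge[OF lam_pos lam_lim ubar_lim] by blast
qed

end
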